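(* Let $N_t,N_r\ge1$ and let $X$ be either $X_{\rm MRC}$ or $X_{\rm MMSE}$ (defined below). Let $C(\rho)=N_t\,\mathrm{E}[\ln(1+\frac{\rho}{N_t}X)]$ (rate in nats), and define $\frac{E_b}{N_0}_{\min}=\frac{\ln 2}{\dot C(0)}$ and $S_0=\frac{2[\dot C(0)]^2}{-\ddot C(0)}$, where dots denote right derivatives with respect to $\rho$ at $\rho=0$. Then for both receivers $$\frac{E_b}{N_0}_{\min}=\frac{\ln 2}{N_r},\qquad S_0=\frac{2N_tN_r}{2N_t+N_r-1}.$$
   Context: Let $\mathbf{H}$ be an $N_r\times N_t$ matrix with i.i.d. $\mathcal{CN}(0,1)$ entries, $\mathbf{h}_j$ its columns, fix $k$, and let $\mathbf{K}$ be $\mathbf{H}$ with column $k$ deleted. $X_{\rm MRC}=\|\mathbf{h}_k\|^2\big/\big(1+\frac{\rho}{N_t}\sum_{j\ne k}|\mathbf{h}_k^\dagger\mathbf{h}_j|^2/\|\mathbf{h}_k\|^2\big)$ and $X_{\rm MMSE}=\mathbf{h}_k^\dagger(\frac{\rho}{N_t}\mathbf{K}\mathbf{K}^\dagger+\mathbf{I}_{N_r})^{-1}\mathbf{h}_k$ (both depend on $\rho$). $\frac{E_b}{N_0}_{\min}$ is the minimum energy per bit and $S_0$ the wideband slope (bits/s/Hz per 3 dB) in Verdú's low-SNR framework. *)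

theory Defs
  imports "HOL-Analysis.Analysis"
begin

text \<open>Channel matrix H :: complex^'t^'r is an N_r x N_t matrix (H$i$j = row i, column j),
  N_r = CARD('r), N_t = CARD('t).  Its law: i.i.d. CN(0,1) entries, i.e. the density
  prod_{i,j} exp(-|H_ij|^2)/pi with respect to Lebesgue measure on C^(N_r x N_t) = R^(2 N_r N_t).\<close>

definition chan_measure :: "(complex^'t::finite^'r::finite) measure" where
  "chan_measure = density lborel
     (\<lambda>H. ennreal (\<Prod>i\<in>UNIV. \<Prod>j\<in>UNIV. exp (- (cmod (H$i$j))\<^sup>2) / pi))"


definition herm :: "complex^'n::finite \<Rightarrow> complex^'n \<Rightarrow> complex" where
  "herm h g = (\<Sum>i\<in>UNIV. cnj (h$i) * g$i)"

definition sqnorm :: "complex^'n::finite \<Rightarrow> real" where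
  "sqnorm h = (\<Sum>i\<in>UNIV. (cmod (h$i))\<^sup>2)"

definition X_MRC :: "'t::finite \<Rightarrow> real \<Rightarrow> complex^'t^'r::finite \<Rightarrow> real" where
  "X_MRC k \<rho> H =
     sqnorm (column k H) /
       (1 + \<rho> / real CARD('t) *
          (\<Sum>j\<in>UNIV - {k}. (cmod (herm (column k H) (column j H)))\<^sup>2) / sqnorm (column k H))"

text \<open>K K^dagger where K is H with column k deleted: (K K^dagger)_{ab} = sum_{j<>k} H_aj conj(H_bj).\<close>
definition KKh :: "'t::finite \<Rightarrow> complex^'t^'r::finite \<Rightarrow> complex^'r^'r" where
  "KKh k H = (\<chi> a b. \<Sum>j\<in>UNIV - {k}. H$a$j * cnj (H$b$j))"

definition X_MMSE :: "'t::finite \<Rightarrow> real \<Rightarrow> complex^'t^'r::finite \<Rightarrow> real" where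
  "X_MMSE k \<rho> H =
     Re (herm (column k H)
          (matrix_inv ((\<rho> / real CARD('t)) *\<^sub>R KKh k H + mat 1) *v column k H))"

definition rate :: "(real \<Rightarrow> complex^'t::finite^'r::finite \<Rightarrow> real) \<Rightarrow> real \<Rightarrow> real" where
  "rate X \<rho> = real CARD('t) *
     (\<integral>H. ln (1 + \<rho> / real CARD('t) * X \<rho> H) \<partial>(chan_measure :: (complex^'t^'r) measure))"

definition EbN0_min :: "real \<Rightarrow> real" where
  "EbN0_min d1 = ln 2 / d1"

definition wideband_slope :: "real \<Rightarrow> real \<Rightarrow> real" where
  "wideband_slope d1 d2 = 2 * d1\<^sup>2 / (- d2)"

definition low_snr :: "(real \<Rightarrow> real) \<Rightarrow> real \<Rightarrow> real \<Rightarrow> bool" where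
  "low_snr C e s \<longleftrightarrow> (\<exists>C1 d2 \<epsilon>. \<epsilon> > 0 \<and>
      (\<forall>\<rho>\<in>{0..<\<epsilon>}. (C has_real_derivative C1 \<rho>) (at \<rho> within {0..})) \<and>
      (C1 has_real_derivative d2) (at 0 within {0..}) \<and>
      EbN0_min (C1 0) = e \<and> wideband_slope (C1 0) d2 = s)"

end

theory Submission
  imports Defs "HOL-Probability.Distributions"
begin

(*
  Write a = ||h_k||^2 (col_energy), c = sum_{j<>k} |h_k^dagger h_j|^2 (interference)
  and N = N_t.  For both receivers the per-channel integrand
  g(rho, H) = ln(1 + rho/N * X(rho, H)) satisfies, for every fixed H,
     d/drho g(0) = a/N        and        d^2/drho^2 g(0) = -(2c + a^2)/N^2.
  For MRC this is a computation with the closed form of X_MRC; for MMSE it follows from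
  the resolvent identity for (I + s K K^dagger)^-1, which gives dX/ds = -u^dagger K K^dagger u.
  Both derivatives of g are dominated by multiples of (1 + ||H||^2)^3, which is integrable
  under the Gaussian channel law, so both derivatives of the rate C(rho) = N E[g(rho, H)]
  may be taken under the integral sign.  The Gaussian moments E[a] = N_r,
  E[a^2] = N_r (N_r + 1) and E[c] = (N_t - 1) N_r (obtained from Isserlis' formula for
  fourth moments) then give C'(0) = N_r and C''(0) = -N_r (2 N_t + N_r - 1)/N_t.
*)

subsection \<open>Calculus on the half-line and differentiation under the integral sign\<close>

lemma divide_le_self: "0 \<le> (x::real) \<Longrightarrow> 1 \<le> N \<Longrightarrow> x / N \<le> x"
  using divide_left_mono[of 1 N x] by simp

lemma lipschitz_from_derivative_bound:
  fixes f f' :: "real \<Rightarrow> real"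
  assumes S: "convex S" "S \<subseteq> {0..}"
  and der: "\<And>r. r \<in> S \<Longrightarrow> (f has_real_derivative f' r) (at r within {0..})"
  and bd: "\<And>r. r \<in> S \<Longrightarrow> \<bar>f' r\<bar> \<le> B"
  and x: "x \<in> S" and y: "y \<in> S"
  shows "\<bar>f x - f y\<bar> \<le> B * \<bar>x - y\<bar>"
proof -
  have "norm (f x - f y) \<le> B * norm (x - y)"
  proof (rule field_differentiable_bound[where S=S and f'=f'])
    fix z :: real assume z: "z \<in> S"
    show "(f has_field_derivative f' z) (at z within S)"
      using der[OF z] S(2) by (rule has_field_derivative_subset)
    show "norm (f' z) \<le> B" using bd[OF z] by simp
  qed (use S x y in auto)
  then show ?thesis by simp
qed

lemma right_approach_sequence:
  fixes rz :: real
  assumes rz: "rz \<in> {0..<\<epsilon>}"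
  obtains X :: "nat \<Rightarrow> real" where "\<forall>n. X n \<in> {0..<\<epsilon>} - {rz}" and "X \<longlonglongrightarrow> rz"
proof
  define X where "X n = rz + (\<epsilon> - rz) / (real n + 2)" for n :: nat
  show "\<forall>n. X n \<in> {0..<\<epsilon>} - {rz}"
  proof
    fix n
    have "0 < (\<epsilon> - rz) / (real n + 2)" "(\<epsilon> - rz) / (real n + 2) < \<epsilon> - rz"
      using rz by (auto simp: divide_less_eq)
    then show "X n \<in> {0..<\<epsilon>} - {rz}" using rz unfolding X_def by auto
  qed
  have "(\<lambda>n. (\<epsilon> - rz) / (real n + 2)) \<longlonglongrightarrow> 0" by real_asymp
  from tendsto_add[OF tendsto_const[of rz] this] show "X \<longlonglongrightarrow> rz"
    unfolding X_def by simp
qed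

text \<open>A right derivative of a family of measurable functions is measurable: it is the
  pointwise limit of measurable difference quotients.\<close>
lemma borel_measurable_right_derivative:
  fixes \<phi> :: "real \<Rightarrow> 'a \<Rightarrow> real"
  assumes rz: "rz \<in> {0..<\<epsilon>}"
  and meas: "\<And>r. r \<in> {0..<\<epsilon>} \<Longrightarrow> \<phi> r \<in> borel_measurable M"
  and der: "\<And>x. x \<in> space M \<Longrightarrow> ((\<lambda>r. \<phi> r x) has_real_derivative \<phi>' x) (at rz within {0..})"
  shows "\<phi>' \<in> borel_measurable M"
proof -
  obtain X where X_in: "\<forall>n. X n \<in> {0..<\<epsilon>} - {rz}" and X_lim: "X \<longlonglongrightarrow> rz"
    using right_approach_sequence[OF rz] .
  show ?thesis
  proof (rule borel_measurable_LIMSEQ_real[where u="\<lambda>n x. (\<phi> (X n) x - \<phi> rz x) / (X n - rz)"])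
    fix x assume "x \<in> space M"
    have "((\<lambda>y. (\<phi> y x - \<phi> rz x) / (y - rz)) \<longlongrightarrow> \<phi>' x) (at rz within {0..})"
      using der[OF \<open>x \<in> space M\<close>] unfolding has_field_derivative_iff .
    moreover have "\<forall>n. X n \<in> {0..} - {rz}" using X_in by auto
    ultimately show "(\<lambda>n. (\<phi> (X n) x - \<phi> rz x) / (X n - rz)) \<longlonglongrightarrow> \<phi>' x"
      using X_lim unfolding tendsto_at_iff_sequentially comp_def by blast
  next
    fix n show "(\<lambda>x. (\<phi> (X n) x - \<phi> rz x) / (X n - rz)) \<in> borel_measurable M"
      using meas[of "X n"] meas[of rz] X_in rz
      by (intro borel_measurable_divide borel_measurable_diff borel_measurable_const) auto
  qed
qed

lemma integral_difference_quotient_limit: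
  fixes \<phi> :: "real \<Rightarrow> 'a \<Rightarrow> real" and M :: "'a measure"
  assumes rz: "rz \<in> {0..<\<epsilon>}"
  and int: "\<And>r. r \<in> {0..<\<epsilon>} \<Longrightarrow> integrable M (\<phi> r)"
  and B: "integrable M B"
  and lip: "\<And>x r. x \<in> space M \<Longrightarrow> r \<in> {0..<\<epsilon>} \<Longrightarrow> \<bar>\<phi> r x - \<phi> rz x\<bar> \<le> B x * \<bar>r - rz\<bar>"
  and der: "\<And>x. x \<in> space M \<Longrightarrow> ((\<lambda>r. \<phi> r x) has_real_derivative \<phi>' x) (at rz within {0..})"
  and Y: "\<forall>i. Y i \<in> {0..<\<epsilon>} - {rz}" "Y \<longlonglongrightarrow> rz"
  shows "integrable M \<phi>'"
    and "(\<lambda>i. \<integral>x. (\<phi> (Y i) x - \<phi> rz x) / (Y i - rz) \<partial>M) \<longlonglongrightarrow> (\<integral>x. \<phi>' x \<partial>M)"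
proof -
  define q where "q y x = (\<phi> y x - \<phi> rz x) / (y - rz)" for y x
  have meas': "\<phi>' \<in> borel_measurable M"
    by (rule borel_measurable_right_derivative[OF rz borel_measurable_integrable[OF int] der])
  have q_meas: "q (Y i) \<in> borel_measurable M" for i
    using int[of "Y i"] int[of rz] Y rz unfolding q_def
    by (intro borel_measurable_divide borel_measurable_diff borel_measurable_const) auto
  have bd: "AE x in M. norm (q (Y i) x) \<le> B x" for i
  proof (rule AE_I2)
    fix x assume x: "x \<in> space M"
    have "\<bar>\<phi> (Y i) x - \<phi> rz x\<bar> \<le> B x * \<bar>Y i - rz\<bar>" using lip[OF x, of "Y i"] Y by auto
    then show "norm (q (Y i) x) \<le> B x" using Y unfolding q_def by (simp add: abs_divide divide_le_eq)
  qed
  have lim: "AE x in M. (\<lambda>i. q (Y i) x) \<longlonglongrightarrow> \<phi>' x"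
  proof (rule AE_I2)
    fix x assume "x \<in> space M"
    then have "((\<lambda>y. q y x) \<longlongrightarrow> \<phi>' x) (at rz within {0..})"
      using der unfolding has_field_derivative_iff q_def by blast
    moreover have "\<forall>i. Y i \<in> {0..} - {rz}" using Y by auto
    ultimately show "(\<lambda>i. q (Y i) x) \<longlonglongrightarrow> \<phi>' x"
      using Y(2) unfolding tendsto_at_iff_sequentially comp_def by blast
  qed
  show "integrable M \<phi>'"
    using integrable_dominated_convergence[OF meas' q_meas B lim bd] .
  show "(\<lambda>i. \<integral>x. (\<phi> (Y i) x - \<phi> rz x) / (Y i - rz) \<partial>M) \<longlonglongrightarrow> (\<integral>x. \<phi>' x \<partial>M)"
    using integral_dominated_convergence[OF meas' q_meas B lim bd] unfolding q_def .
qed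

lemma has_real_derivative_integral:
  fixes \<phi> :: "real \<Rightarrow> 'a \<Rightarrow> real" and M :: "'a measure"
  assumes rz: "rz \<in> {0..<\<epsilon>}"
  and int: "\<And>r. r \<in> {0..<\<epsilon>} \<Longrightarrow> integrable M (\<phi> r)"
  and B: "integrable M B"
  and lip: "\<And>x r. x \<in> space M \<Longrightarrow> r \<in> {0..<\<epsilon>} \<Longrightarrow> \<bar>\<phi> r x - \<phi> rz x\<bar> \<le> B x * \<bar>r - rz\<bar>"
  and der: "\<And>x. x \<in> space M \<Longrightarrow> ((\<lambda>r. \<phi> r x) has_real_derivative \<phi>' x) (at rz within {0..})"
  shows "((\<lambda>r. \<integral>x. \<phi> r x \<partial>M) has_real_derivative (\<integral>x. \<phi>' x \<partial>M)) (at rz within {0..})"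
    and "integrable M \<phi>'"
proof -
  obtain Y where Y: "\<forall>i. Y i \<in> {0..<\<epsilon>} - {rz}" "Y \<longlonglongrightarrow> rz"
    using right_approach_sequence[OF rz] by blast
  show "integrable M \<phi>'"
    using rz int B lip der Y by (rule integral_difference_quotient_limit(1))
  have atS: "at rz within {0..} = at rz within {0..<\<epsilon>}"
    using rz by (intro at_within_nhd[where S="{..<\<epsilon>}"]) auto
  have "((\<lambda>y. ((\<integral>x. \<phi> y x \<partial>M) - (\<integral>x. \<phi> rz x \<partial>M)) / (y - rz)) \<longlongrightarrow> (\<integral>x. \<phi>' x \<partial>M))
    (at rz within {0..<\<epsilon>})"
    unfolding tendsto_at_iff_sequentially comp_def
  proof (intro allI impI)
    fix Y assume Y': "\<forall>i. Y i \<in> {0..<\<epsilon>} - {rz}" "Y \<longlonglongrightarrow> rz"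
    have eq: "((\<integral>x. \<phi> (Y i) x \<partial>M) - (\<integral>x. \<phi> rz x \<partial>M)) / (Y i - rz)
        = (\<integral>x. (\<phi> (Y i) x - \<phi> rz x) / (Y i - rz) \<partial>M)" for i
      using Y'(1) int[of "Y i"] int[of rz] rz by (simp add: integral_diff)
    have "(\<lambda>i. \<integral>x. (\<phi> (Y i) x - \<phi> rz x) / (Y i - rz) \<partial>M) \<longlonglongrightarrow> (\<integral>x. \<phi>' x \<partial>M)"
      using rz int B lip der Y' by (rule integral_difference_quotient_limit(2))
    then show "(\<lambda>i. ((\<integral>x. \<phi> (Y i) x \<partial>M) - (\<integral>x. \<phi> rz x \<partial>M)) / (Y i - rz)) \<longlonglongrightarrow> (\<integral>x. \<phi>' x \<partial>M)"
      unfolding eq .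
  qed
  then show "((\<lambda>r. \<integral>x. \<phi> r x \<partial>M) has_real_derivative (\<integral>x. \<phi>' x \<partial>M)) (at rz within {0..})"
    unfolding atS has_field_derivative_iff .
qed

lemma tendsto_within_atLeast_0_of_lipschitz:
  fixes f :: "real \<Rightarrow> real"
  assumes "\<And>y. 0 \<le> y \<Longrightarrow> \<bar>f y - f x\<bar> \<le> C * \<bar>y - x\<bar>"
  shows "(f \<longlongrightarrow> f x) (at x within {0..})"
proof -
  have "((\<lambda>y. f y - f x) \<longlongrightarrow> 0) (at x within {0..})"
  proof (rule Lim_null_comparison)
    show "\<forall>\<^sub>F y in at x within {0..}. norm (f y - f x) \<le> C * \<bar>y - x\<bar>"
      unfolding eventually_at_filter by (intro always_eventually) (auto intro: assms)
    have "((\<lambda>y. C * \<bar>y - x\<bar>) \<longlongrightarrow> C * \<bar>x - x\<bar>) (at x within {0..})" by (intro tendsto_intros)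
    then show "((\<lambda>y. C * \<bar>y - x\<bar>) \<longlongrightarrow> 0) (at x within {0..})" by simp
  qed
  then show ?thesis by (rule LIM_zero_cancel)
qed

lemma has_real_derivative_scaled_at_0:
  fixes f :: "real \<Rightarrow> real"
  assumes "(f \<longlongrightarrow> f 0) (at 0 within {0..})" and N: "N \<noteq> 0"
  shows "((\<lambda>\<rho>. \<rho> / N * f \<rho>) has_real_derivative f 0 / N) (at 0 within {0..})"
  unfolding has_field_derivative_iff
proof -
  have "((\<lambda>y. f y / N) \<longlongrightarrow> f 0 / N) (at 0 within {0..})" by (intro tendsto_intros assms)
  then show "((\<lambda>y. (y / N * f y - 0 / N * f 0) / (y - 0)) \<longlongrightarrow> f 0 / N) (at 0 within {0..})"
  proof (rule Lim_transform_eventually)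
    show "\<forall>\<^sub>F y in at 0 within {0..}. f y / N = (y / N * f y - 0 / N * f 0) / (y - 0)"
      unfolding eventually_at_filter by (intro always_eventually) auto
  qed
qed

text \<open>Scaling by a positive constant maps the half-line onto itself; needed to transport
  one-sided derivatives through the substitution \<open>s = \<rho>/N\<close>.\<close>
lemma image_divide_atLeast_0: "0 < (N::real) \<Longrightarrow> (\<lambda>\<rho>. \<rho> / N) ` {0..} = {0..}"
proof
  assume N: "0 < N"
  show "(\<lambda>\<rho>. \<rho> / N) ` {0..} \<subseteq> {0..}" using N by auto
  show "{0..} \<subseteq> (\<lambda>\<rho>. \<rho> / N) ` {0..}"
  proof
    fix x :: real assume "x \<in> {0..}"
    then have "x = (x * N) / N" "x * N \<in> {0..}" using N by auto
    then show "x \<in> (\<lambda>\<rho>. \<rho> / N) ` {0..}" by blast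
  qed
qed

subsection \<open>Moments of the Gaussian channel law\<close>

text \<open>Each real coordinate of a \<open>CN(0,1)\<close> entry is \<open>N(0,1/2)\<close>, with density \<open>gdens\<close>.\<close>
definition gdens :: "real \<Rightarrow> real" where "gdens x = exp (- x\<^sup>2) / sqrt pi"

lemma gdens_normal_density: "gdens x = normal_density 0 (1 / sqrt 2) x"
  by (simp add: gdens_def normal_density_def power_divide)

lemma gdens_nonneg: "0 \<le> gdens x" by (simp add: gdens_def)

lemma gdens_measurable[measurable]: "gdens \<in> borel_measurable borel"
  unfolding gdens_def by measurable

lemma gdens_moment_even:
  "has_bochner_integral lborel (\<lambda>x. gdens x * x ^ (2*k)) (fact (2 * k) / (4^k * fact k))"
  using normal_moment_even[where k=k and \<mu>=0 and \<sigma>="1 / sqrt 2"]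
  by (simp add: gdens_normal_density power_divide)

lemma gdens_moment_odd: "has_bochner_integral lborel (\<lambda>x. gdens x * x ^ (2*k+1)) 0"
  using normal_moment_odd[where k=k and \<mu>=0 and \<sigma>="1 / sqrt 2"] by (simp add: gdens_normal_density)

lemma gdens_moment_integrable: "integrable lborel (\<lambda>x. gdens x * x ^ k)"
proof (cases "even k")
  case True then obtain m where "k = 2*m" by auto
  then show ?thesis using gdens_moment_even[of m] by (auto simp: has_bochner_integral_iff)
next
  case False then obtain m where "k = 2*m+1" using oddE by blast
  then show ?thesis using gdens_moment_odd[of m] by (auto simp: has_bochner_integral_iff)
qed

definition gmom :: "nat \<Rightarrow> real" where "gmom k = (\<integral>x. gdens x * x ^ k \<partial>lborel)"

text \<open>The moments up to order four are all that the second-order analysis needs.\<close>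
lemma gmom_values:
  "gmom 0 = 1" "gmom (Suc 0) = 0" "gmom (Suc (Suc 0)) = 1/2" "gmom (Suc (Suc (Suc 0))) = 0"
  "gmom (Suc (Suc (Suc (Suc 0)))) = 3/4"
proof -
  have "gmom 0 = 1" "gmom 1 = 0" "gmom 2 = 1/2" "gmom 3 = 0" "gmom 4 = 3/4"
    using gdens_moment_even[of 0] gdens_moment_odd[of 0] gdens_moment_even[of 1]
      gdens_moment_odd[of 1] gdens_moment_even[of 2]
    unfolding gmom_def by (auto dest!: has_bochner_integral_integral_eq simp: fact_numeral)
  then show "gmom 0 = 1" "gmom (Suc 0) = 0" "gmom (Suc (Suc 0)) = 1/2" "gmom (Suc (Suc (Suc 0))) = 0"
    "gmom (Suc (Suc (Suc (Suc 0)))) = 3/4" by (simp_all add: numeral_eq_Suc)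
qed

lemma prod_Basis_vec:
  "(\<Prod>b\<in>(Basis::('a::euclidean_space^'n) set). g b) = (\<Prod>i\<in>UNIV. \<Prod>u\<in>Basis. g (axis i u))"
proof -
  have B: "(Basis::('a^'n) set) = (\<lambda>(i,u). axis i u) ` (UNIV \<times> Basis)"
    unfolding Basis_vec_def by auto
  have inj: "inj_on (\<lambda>(i,u). axis i u :: 'a^'n) (UNIV \<times> Basis)"
    by (auto simp: inj_on_def axis_eq_axis nonzero_Basis)
  show ?thesis unfolding B prod.reindex[OF inj] by (subst prod.cartesian_product) (simp add: split_def)
qed

definition basis_re :: "'r \<Rightarrow> 't \<Rightarrow> complex^'t^'r" where "basis_re i j = axis i (axis j 1)"
definition basis_im :: "'r \<Rightarrow> 't \<Rightarrow> complex^'t^'r" where "basis_im i j = axis i (axis j \<i>)"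

lemma basis_re_Basis[simp]: "basis_re i j \<in> (Basis :: (complex^'t::finite^'r::finite) set)"
  unfolding basis_re_def Basis_vec_def by auto
lemma basis_im_Basis[simp]: "basis_im i j \<in> (Basis :: (complex^'t::finite^'r::finite) set)"
  unfolding basis_im_def Basis_vec_def by auto
lemma basis_re_eq[simp]: "(basis_re i j = (basis_re i' j' :: complex^'t::finite^'r::finite)) \<longleftrightarrow> i = i' \<and> j = j'"
  unfolding basis_re_def by (auto simp: axis_eq_axis)
lemma basis_im_eq[simp]: "(basis_im i j = (basis_im i' j' :: complex^'t::finite^'r::finite)) \<longleftrightarrow> i = i' \<and> j = j'"
  unfolding basis_im_def by (auto simp: axis_eq_axis)
lemma basis_re_im_neq[simp]: "(basis_re i j = (basis_im i' j' :: complex^'t::finite^'r::finite)) = False"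
   "(basis_im i j = (basis_re i' j' :: complex^'t::finite^'r::finite)) = False"
  unfolding basis_re_def basis_im_def by (auto simp: axis_eq_axis complex_eq_iff)

lemma inner_basis_re: "H \<bullet> basis_re i j = Re (H$i$j)" unfolding basis_re_def by (simp add: inner_axis)
lemma inner_basis_im: "H \<bullet> basis_im i j = Im (H$i$j)" unfolding basis_im_def by (simp add: inner_axis)

lemma chan_density_prod:
  "(\<Prod>i\<in>UNIV. \<Prod>j\<in>UNIV. exp (- (cmod (H$i$j))\<^sup>2) / pi)
    = (\<Prod>b\<in>(Basis::(complex^'t::finite^'r::finite) set). gdens (H \<bullet> b))"
proof -
  have "(\<Prod>b\<in>(Basis::(complex^'t^'r) set). gdens (H \<bullet> b)) = (\<Prod>i\<in>UNIV. \<Prod>j\<in>UNIV. gdens (Re (H$i$j)) * gdens (Im (H$i$j)))"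
    unfolding prod_Basis_vec by (simp add: inner_axis Basis_complex_def)
  also have "\<dots> = (\<Prod>i\<in>UNIV. \<Prod>j\<in>UNIV. exp (- (cmod (H$i$j))\<^sup>2) / pi)"
    by (intro prod.cong refl) (simp add: gdens_def cmod_power2 exp_diff exp_minus field_simps)
  finally show ?thesis by simp
qed

text \<open>Coordinates: \<open>lborel\<close> on \<open>complex^'t^'r\<close> is the image of the product of real
  Lebesgue measures under \<open>from_coords\<close>.\<close>
abbreviation "coord_measure \<equiv> (\<Pi>\<^sub>M b\<in>(Basis::(complex^'t::finite^'r::finite) set). (lborel::real measure))"
abbreviation "from_coords \<equiv> (\<lambda>f. \<Sum>b\<in>(Basis::(complex^'t::finite^'r::finite) set). f b *\<^sub>R b)"

lemma from_coords_inner: "b \<in> Basis \<Longrightarrow> from_coords f \<bullet> (b :: complex^'t::finite^'r::finite) = f b"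
  by (simp add: inner_sum_left inner_Basis if_distrib cong: if_cong)

lemma chan_measure_Basis: "(chan_measure :: (complex^'t::finite^'r::finite) measure) =
   density lborel (\<lambda>H. ennreal (\<Prod>b\<in>Basis. gdens (H \<bullet> b)))"
  unfolding chan_measure_def chan_density_prod ..

lemma chan_integral_coords:
  fixes F :: "complex^'t::finite^'r::finite \<Rightarrow> real"
  assumes [measurable]: "F \<in> borel_measurable borel"
  shows "(\<integral>H. F H \<partial>chan_measure)
      = (\<integral>f. (\<Prod>b\<in>Basis. gdens (f b)) * F (from_coords f) \<partial>(coord_measure :: (complex^'t^'r \<Rightarrow> real) measure))"
    and "integrable chan_measure F \<longleftrightarrow>
      integrable (coord_measure :: (complex^'t^'r \<Rightarrow> real) measure) (\<lambda>f. (\<Prod>b\<in>Basis. gdens (f b)) * F (from_coords f))"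
proof -
  have m: "(\<lambda>H::complex^'t^'r. \<Prod>b\<in>Basis. gdens (H \<bullet> b)) \<in> borel_measurable borel" by measurable
  have c: "(\<Prod>b\<in>Basis. gdens (from_coords f \<bullet> b)) = (\<Prod>b\<in>Basis. gdens (f b))" for f :: "complex^'t^'r \<Rightarrow> real"
    by (intro prod.cong refl) (simp add: from_coords_inner)
  have "(\<integral>H. F H \<partial>chan_measure) = (\<integral>H. (\<Prod>b\<in>Basis. gdens (H \<bullet> b)) * F H \<partial>lborel)"
    unfolding chan_measure_Basis by (subst integral_density) (simp_all add: m gdens_nonneg prod_nonneg)
  also have "\<dots> = (\<integral>f. (\<Prod>b\<in>Basis. gdens (f b)) * F (from_coords f) \<partial>coord_measure)"
    by (subst lborel_eq, subst integral_distr) (simp_all add: c)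
  finally show "(\<integral>H. F H \<partial>chan_measure)
      = (\<integral>f. (\<Prod>b\<in>Basis. gdens (f b)) * F (from_coords f) \<partial>(coord_measure :: (complex^'t^'r \<Rightarrow> real) measure))" .
  have "integrable chan_measure F \<longleftrightarrow> integrable lborel (\<lambda>H. (\<Prod>b\<in>Basis. gdens (H \<bullet> b)) * F H)"
    unfolding chan_measure_Basis by (subst integrable_density) (simp_all add: m gdens_nonneg prod_nonneg)
  also have "\<dots> \<longleftrightarrow> integrable coord_measure (\<lambda>f. (\<Prod>b\<in>Basis. gdens (f b)) * F (from_coords f))"
    by (subst lborel_eq, subst integrable_distr_eq) (simp_all add: c)
  finally show "integrable chan_measure F \<longleftrightarrow>
      integrable (coord_measure :: (complex^'t^'r \<Rightarrow> real) measure) (\<lambda>f. (\<Prod>b\<in>Basis. gdens (f b)) * F (from_coords f))" .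
qed

lemma chan_integral_prod:
  fixes G :: "(complex^'t::finite^'r::finite) \<Rightarrow> real \<Rightarrow> real"
  assumes int: "\<And>b. b \<in> Basis \<Longrightarrow> integrable lborel (\<lambda>x. gdens x * G b x)"
  and meas[measurable]: "\<And>b. G b \<in> borel_measurable borel"
  shows "integrable chan_measure (\<lambda>H. \<Prod>b\<in>Basis. G b (H \<bullet> b))"
    and "(\<integral>H. (\<Prod>b\<in>Basis. G b (H \<bullet> b)) \<partial>chan_measure) = (\<Prod>b\<in>Basis. \<integral>x. gdens x * G b x \<partial>lborel)"
proof -
  interpret product_sigma_finite "\<lambda>_::complex^'t^'r. lborel::real measure" by standard
  have m: "(\<lambda>H. \<Prod>b\<in>Basis. G b (H \<bullet> b)) \<in> borel_measurable (borel :: (complex^'t^'r) measure)"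
    by measurable
  have eq: "(\<Prod>b\<in>Basis. gdens (f b)) * (\<Prod>b\<in>Basis. G b (from_coords f \<bullet> b))
      = (\<Prod>b\<in>Basis. gdens (f b) * G b (f b))" for f :: "complex^'t^'r \<Rightarrow> real"
    by (simp add: prod.distrib[symmetric] from_coords_inner cong: prod.cong)
  show "integrable chan_measure (\<lambda>H. \<Prod>b\<in>Basis. G b (H \<bullet> b))"
    unfolding chan_integral_coords(2)[OF m] eq
    by (rule product_integrable_prod) (auto intro: int)
  show "(\<integral>H. (\<Prod>b\<in>Basis. G b (H \<bullet> b)) \<partial>chan_measure) = (\<Prod>b\<in>Basis. \<integral>x. gdens x * G b x \<partial>lborel)"
    unfolding chan_integral_coords(1)[OF m] eq
    by (rule product_integral_prod) (auto intro: int)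
qed

lemma chan_monomial:
  fixes e :: "complex^'t::finite^'r::finite \<Rightarrow> nat"
  shows "integrable chan_measure (\<lambda>H. \<Prod>b\<in>Basis. (H \<bullet> b) ^ e b)"
    and "(\<integral>H. (\<Prod>b\<in>Basis. (H \<bullet> b) ^ e b) \<partial>chan_measure) = (\<Prod>b\<in>Basis. gmom (e b))"
  using chan_integral_prod[where G="\<lambda>b x. x ^ e b", OF gdens_moment_integrable]
  unfolding gmom_def by simp_all

lemma prod_power_indicator:
  "finite A \<Longrightarrow> c \<in> A \<Longrightarrow> (\<Prod>b\<in>A. (y b :: real) ^ (of_bool (b = c))) = y c"
proof -
  assume "finite A" "c \<in> A"
  have "(\<Prod>b\<in>A. (y b :: real) ^ (of_bool (b = c))) = (\<Prod>b\<in>A. if b = c then y b else 1)"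
    by (intro prod.cong) auto
  then show ?thesis using \<open>finite A\<close> \<open>c \<in> A\<close> by (simp add: prod.delta)
qed

text \<open>Second and fourth moments of the coordinates (Isserlis' theorem for a Gaussian vector
  with covariance \<open>I/2\<close>).\<close>
lemma chan_moment2:
  fixes b1 b2 :: "complex^'t::finite^'r::finite"
  assumes B: "b1 \<in> Basis" "b2 \<in> Basis"
  shows "integrable chan_measure (\<lambda>H. (H\<bullet>b1)*(H\<bullet>b2))"
    and "(\<integral>H. (H\<bullet>b1)*(H\<bullet>b2) \<partial>chan_measure) = of_bool (b1 = b2) / 2"
proof -
  define e where "e b = of_bool (b=b1) + (of_bool (b=b2)::nat)" for b
  have eq: "(H\<bullet>b1)*(H\<bullet>b2) = (\<Prod>b\<in>Basis. (H\<bullet>b) ^ e b)" for H :: "complex^'t^'r"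
    unfolding e_def power_add prod.distrib using B by (simp add: prod_power_indicator)
  show "integrable chan_measure (\<lambda>H. (H\<bullet>b1)*(H\<bullet>b2))"
    unfolding eq by (rule chan_monomial)
  have "(\<integral>H. (H\<bullet>b1)*(H\<bullet>b2) \<partial>chan_measure) = (\<Prod>b\<in>{b1,b2}. gmom (e b))"
    unfolding eq chan_monomial by (rule prod.mono_neutral_right) (auto simp: B e_def gmom_values)
  also have "\<dots> = of_bool (b1 = b2) / 2"
    unfolding e_def by (cases "b1=b2") (simp_all add: gmom_values)
  finally show "(\<integral>H. (H\<bullet>b1)*(H\<bullet>b2) \<partial>chan_measure) = of_bool (b1 = b2) / 2" .
qed

definition isserlis4 :: "'a \<Rightarrow> 'a \<Rightarrow> 'a \<Rightarrow> 'a \<Rightarrow> real" where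
  "isserlis4 b1 b2 b3 b4 = (of_bool (b1=b2) * of_bool (b3=b4) + of_bool (b1=b3) * of_bool (b2=b4)
     + of_bool (b1=b4) * of_bool (b2=b3)) / 4"

lemma chan_moment4:
  fixes b1 b2 b3 b4 :: "complex^'t::finite^'r::finite"
  assumes B: "b1 \<in> Basis" "b2 \<in> Basis" "b3 \<in> Basis" "b4 \<in> Basis"
  shows "integrable chan_measure (\<lambda>H. (H\<bullet>b1)*(H\<bullet>b2)*(H\<bullet>b3)*(H\<bullet>b4))"
    and "(\<integral>H. (H\<bullet>b1)*(H\<bullet>b2)*(H\<bullet>b3)*(H\<bullet>b4) \<partial>chan_measure) = isserlis4 b1 b2 b3 b4"
proof -
  define e where "e b = of_bool (b=b1) + of_bool (b=b2) + of_bool (b=b3) + (of_bool (b=b4)::nat)" for b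
  have eq: "(H\<bullet>b1)*(H\<bullet>b2)*(H\<bullet>b3)*(H\<bullet>b4) = (\<Prod>b\<in>Basis. (H\<bullet>b) ^ e b)" for H :: "complex^'t^'r"
    unfolding e_def power_add prod.distrib using B by (simp add: prod_power_indicator)
  show "integrable chan_measure (\<lambda>H. (H\<bullet>b1)*(H\<bullet>b2)*(H\<bullet>b3)*(H\<bullet>b4))"
    unfolding eq by (rule chan_monomial)
  have "(\<integral>H. (H\<bullet>b1)*(H\<bullet>b2)*(H\<bullet>b3)*(H\<bullet>b4) \<partial>chan_measure) = (\<Prod>b\<in>{b1,b2,b3,b4}. gmom (e b))"
    unfolding eq chan_monomial by (rule prod.mono_neutral_right) (auto simp: B e_def gmom_values)
  also have "\<dots> = isserlis4 b1 b2 b3 b4"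
    unfolding isserlis4_def e_def
    by (cases "b1=b2"; cases "b1=b3"; cases "b1=b4"; cases "b2=b3"; cases "b2=b4"; cases "b3=b4")
       (simp_all add: gmom_values insert_commute)
  finally show "(\<integral>H. (H\<bullet>b1)*(H\<bullet>b2)*(H\<bullet>b3)*(H\<bullet>b4) \<partial>chan_measure) = isserlis4 b1 b2 b3 b4" .
qed

lemma sqnorm_norm: "sqnorm x = (norm x)\<^sup>2"
  by (simp add: sqnorm_def norm_vec_def L2_set_def sum_nonneg)

lemma herm_add_right: "herm x (y + z) = herm x y + herm x z"
  by (simp add: herm_def algebra_simps sum.distrib)
lemma herm_add_left: "herm (x + y) z = herm x z + herm y z"
  by (simp add: herm_def algebra_simps sum.distrib)
lemma herm_diff_right: "herm x (y - z) = herm x y - herm x z"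
  by (simp add: herm_def algebra_simps sum_subtractf)
lemma herm_diff_left: "herm (x - y) z = herm x z - herm y z"
  by (simp add: herm_def algebra_simps sum_subtractf)
lemma herm_scale_right: "herm x (c *s y) = c * herm x y"
  by (simp add: herm_def sum_distrib_left algebra_simps)
lemma herm_scale_left: "herm (c *s x) y = cnj c * herm x y"
  by (simp add: herm_def sum_distrib_left algebra_simps)
lemma herm_sum_right: "herm x (\<Sum>j\<in>A. f j) = (\<Sum>j\<in>A. herm x (f j))"
  by (simp add: herm_def sum_component sum_distrib_left) (rule sum.swap)
lemma herm_sum_left: "herm (\<Sum>j\<in>A. f j) x = (\<Sum>j\<in>A. herm (f j) x)"
  by (simp add: herm_def sum_component sum_distrib_right) (rule sum.swap)
lemma cnj_mult_self: "cnj z * z = complex_of_real ((cmod z)\<^sup>2)"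
  by (subst mult.commute) (simp add: complex_mult_cnj cmod_power2)
lemma herm_cnj: "herm y x = cnj (herm x y)"
  by (simp add: herm_def mult.commute)
lemma herm_zero_right[simp]: "herm x 0 = 0" by (simp add: herm_def)
lemma herm_self: "herm x x = of_real ((norm x)\<^sup>2)"
proof -
  have "herm x x = of_real (sqnorm x)"
    by (simp add: herm_def sqnorm_def cnj_mult_self)
  then show ?thesis by (simp add: sqnorm_norm)
qed
lemma Re_herm_self: "Re (herm x x) = (norm x)\<^sup>2" by (simp add: herm_self)

lemma herm_CS: "cmod (herm x y) \<le> norm x * norm y"
proof -
  have "cmod (herm x y) \<le> (\<Sum>i\<in>UNIV. cmod (x$i) * cmod (y$i))"
    unfolding herm_def by (rule order_trans[OF norm_sum]) (simp add: norm_mult)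
  also have "\<dots> \<le> L2_set (\<lambda>i. cmod (x$i)) UNIV * L2_set (\<lambda>i. cmod (y$i)) UNIV"
    using L2_set_mult_ineq[of "\<lambda>i. cmod (x$i)" "\<lambda>i. cmod (y$i)" UNIV] by simp
  finally show ?thesis by (simp add: norm_vec_def)
qed

lemma abs_Re_herm_le: "\<bar>Re (herm x y)\<bar> \<le> norm x * norm y"
  using abs_Re_le_cmod herm_CS order_trans by blast

lemma herm_CS2: "(cmod (herm x y))\<^sup>2 \<le> (norm x)\<^sup>2 * (norm y)\<^sup>2"
  using herm_CS[of x y] by (metis norm_ge_zero power_mono power_mult_distrib)

lemma norm_scale_vec: "norm (c *s (x :: complex^'n::finite)) = cmod c * norm x"
  unfolding norm_vec_def by (simp add: L2_set_right_distrib norm_mult)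

lemma cmod_sq: "(cmod z)\<^sup>2 = Re z * Re z + Im z * Im z"
  by (subst cmod_power2) (simp add: power2_eq_square)

lemma sum_sqnorm_cols: "(\<Sum>j\<in>UNIV. sqnorm (column j H)) = (norm (H :: complex^'t::finite^'r::finite))\<^sup>2"
proof -
  have "(norm H)\<^sup>2 = (\<Sum>i\<in>UNIV. \<Sum>j\<in>UNIV. (cmod (H$i$j))\<^sup>2)"
    by (simp add: norm_vec_def L2_set_def sum_nonneg)
  also have "\<dots> = (\<Sum>j\<in>UNIV. sqnorm (column j H))"
    unfolding sqnorm_def column_def by (simp, rule sum.swap)
  finally show ?thesis by simp
qed

lemma norm_column_le: "norm (column j (H :: complex^'t::finite^'r::finite)) \<le> norm H"
proof -
  have "sqnorm (column j H) \<le> (\<Sum>j'\<in>UNIV. sqnorm (column j' H))"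
    by (rule member_le_sum) (auto simp: sqnorm_norm)
  then have "(norm (column j H))\<^sup>2 \<le> (\<Sum>j'\<in>UNIV. sqnorm (column j' H))" by (simp add: sqnorm_norm)
  then have "(norm (column j H))\<^sup>2 \<le> (norm H)\<^sup>2" by (simp add: sum_sqnorm_cols)
  then show ?thesis by (rule power2_le_imp_le) simp
qed

lemma column_diff: "column j (A - B) = column j A - column j (B :: 'a::ab_group_add^'t^'r)"
  by (simp add: vec_eq_iff column_def)

definition col_energy :: "'t \<Rightarrow> complex^'t::finite^'r::finite \<Rightarrow> real" where
  "col_energy k H = sqnorm (column k H)"
definition interference :: "'t \<Rightarrow> complex^'t::finite^'r::finite \<Rightarrow> real" where
  "interference k H = (\<Sum>j\<in>UNIV - {k}. (cmod (herm (column k H) (column j H)))\<^sup>2)"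
definition others_energy :: "'t \<Rightarrow> complex^'t::finite^'r::finite \<Rightarrow> real" where
  "others_energy k H = (\<Sum>j\<in>UNIV - {k}. (norm (column j H))\<^sup>2)"

lemma col_energy_norm: "col_energy k H = (norm (column k H))\<^sup>2"
  by (simp add: col_energy_def sqnorm_norm)

lemma col_energy_nonneg: "0 \<le> col_energy k H" by (simp add: col_energy_norm)
lemma interference_nonneg: "0 \<le> interference k H" by (simp add: interference_def sum_nonneg)
lemma others_energy_nonneg: "0 \<le> others_energy k H" by (simp add: others_energy_def sum_nonneg)

lemma col_energy_plus_others: "col_energy k H + others_energy k H = (norm H)\<^sup>2"
proof -
  have "(norm H)\<^sup>2 = (\<Sum>j\<in>UNIV. (norm (column j H))\<^sup>2)"
    using sum_sqnorm_cols[of H] by (simp add: sqnorm_norm)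
  also have "\<dots> = (norm (column k H))\<^sup>2 + others_energy k H"
    unfolding others_energy_def by (subst sum.remove[of UNIV k]) auto
  finally show ?thesis by (simp add: col_energy_norm)
qed

lemma col_energy_le: "col_energy k H \<le> (norm H)\<^sup>2"
  using col_energy_plus_others[of k H] others_energy_nonneg[of k H] by linarith
lemma others_energy_le: "others_energy k H \<le> (norm H)\<^sup>2"
  using col_energy_plus_others[of k H] col_energy_nonneg[of k H] by linarith

lemma interference_le: "interference k H \<le> col_energy k H * others_energy k H"
proof -
  have "interference k H \<le> (\<Sum>j\<in>UNIV - {k}. (norm (column k H))\<^sup>2 * (norm (column j H))\<^sup>2)"
    unfolding interference_def by (intro sum_mono herm_CS2)
  then show ?thesis by (simp add: col_energy_norm others_energy_def sum_distrib_left)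
qed

lemma interference_zero: "col_energy k H = 0 \<Longrightarrow> interference k H = 0"
  using interference_le[of k H] interference_nonneg[of k H] by simp

lemma col_energy_coords: "col_energy k H =
  (\<Sum>i\<in>UNIV. (H\<bullet>basis_re i k)*(H\<bullet>basis_re i k) + (H\<bullet>basis_im i k)*(H\<bullet>basis_im i k))"
  unfolding col_energy_def sqnorm_def inner_basis_re inner_basis_im by (simp add: cmod_sq column_def)

lemma col_energy_sq_coords: "(col_energy k H)\<^sup>2 = (\<Sum>i\<in>UNIV. \<Sum>i'\<in>UNIV.
      (H\<bullet>basis_re i k)*(H\<bullet>basis_re i k)*(H\<bullet>basis_re i' k)*(H\<bullet>basis_re i' k)
    + (H\<bullet>basis_re i k)*(H\<bullet>basis_re i k)*(H\<bullet>basis_im i' k)*(H\<bullet>basis_im i' k)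
    + (H\<bullet>basis_im i k)*(H\<bullet>basis_im i k)*(H\<bullet>basis_re i' k)*(H\<bullet>basis_re i' k)
    + (H\<bullet>basis_im i k)*(H\<bullet>basis_im i k)*(H\<bullet>basis_im i' k)*(H\<bullet>basis_im i' k))"
  unfolding col_energy_coords power2_eq_square sum_product by (simp add: algebra_simps)

lemma herm_sq_coords:
  "(cmod (herm (column k H) (column j H)))\<^sup>2 = (\<Sum>i\<in>UNIV. \<Sum>i'\<in>UNIV.
      (H\<bullet>basis_re i k)*(H\<bullet>basis_re i j)*(H\<bullet>basis_re i' k)*(H\<bullet>basis_re i' j)
    + (H\<bullet>basis_re i k)*(H\<bullet>basis_re i j)*(H\<bullet>basis_im i' k)*(H\<bullet>basis_im i' j)
    + (H\<bullet>basis_im i k)*(H\<bullet>basis_im i j)*(H\<bullet>basis_re i' k)*(H\<bullet>basis_re i' j)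
    + (H\<bullet>basis_im i k)*(H\<bullet>basis_im i j)*(H\<bullet>basis_im i' k)*(H\<bullet>basis_im i' j)
    + (H\<bullet>basis_re i k)*(H\<bullet>basis_im i j)*(H\<bullet>basis_re i' k)*(H\<bullet>basis_im i' j)
    - (H\<bullet>basis_re i k)*(H\<bullet>basis_im i j)*(H\<bullet>basis_im i' k)*(H\<bullet>basis_re i' j)
    - (H\<bullet>basis_im i k)*(H\<bullet>basis_re i j)*(H\<bullet>basis_re i' k)*(H\<bullet>basis_im i' j)
    + (H\<bullet>basis_im i k)*(H\<bullet>basis_re i j)*(H\<bullet>basis_im i' k)*(H\<bullet>basis_re i' j))"
  (is "_ = ?rhs")
proof -
  have re: "Re (herm (column k H) (column j H))
      = (\<Sum>i\<in>UNIV. (H\<bullet>basis_re i k)*(H\<bullet>basis_re i j) + (H\<bullet>basis_im i k)*(H\<bullet>basis_im i j))"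
    unfolding herm_def inner_basis_re inner_basis_im by (simp add: column_def Re_sum)
  have im: "Im (herm (column k H) (column j H))
      = (\<Sum>i\<in>UNIV. (H\<bullet>basis_re i k)*(H\<bullet>basis_im i j) - (H\<bullet>basis_im i k)*(H\<bullet>basis_re i j))"
    unfolding herm_def inner_basis_re inner_basis_im by (simp add: column_def Im_sum)
  define A where "A i = (H\<bullet>basis_re i k)*(H\<bullet>basis_re i j) + (H\<bullet>basis_im i k)*(H\<bullet>basis_im i j)" for i
  define B where "B i = (H\<bullet>basis_re i k)*(H\<bullet>basis_im i j) - (H\<bullet>basis_im i k)*(H\<bullet>basis_re i j)" for i
  have "(cmod (herm (column k H) (column j H)))\<^sup>2
      = (\<Sum>i\<in>UNIV. A i) * (\<Sum>i\<in>UNIV. A i) + (\<Sum>i\<in>UNIV. B i) * (\<Sum>i\<in>UNIV. B i)"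
    unfolding cmod_sq re im A_def B_def ..
  also have "\<dots> = (\<Sum>i\<in>UNIV. \<Sum>i'\<in>UNIV. A i * A i' + B i * B i')"
    by (simp add: sum_product sum.distrib)
  also have "\<dots> = ?rhs"
    by (intro sum.cong refl) (simp add: A_def B_def algebra_simps)
  finally show ?thesis .
qed

lemma
  fixes k :: "'t::finite"
  shows integrable_col_energy: "integrable (chan_measure :: (complex^'t^'r::finite) measure) (col_energy k)"
    and expectation_col_energy:
      "(\<integral>H. col_energy k H \<partial>(chan_measure :: (complex^'t^'r::finite) measure)) = real CARD('r)"
  by (simp_all add: col_energy_coords[abs_def] integral_sum integral_add chan_moment2)

lemma
  fixes k :: "'t::finite"
  shows integrable_col_energy_sq:
      "integrable (chan_measure :: (complex^'t^'r::finite) measure) (\<lambda>H. (col_energy k H)\<^sup>2)"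
    and expectation_col_energy_sq:
      "(\<integral>H. (col_energy k H)\<^sup>2 \<partial>(chan_measure :: (complex^'t^'r::finite) measure))
         = real CARD('r) * (real CARD('r) + 1)"
proof -
  show "integrable (chan_measure :: (complex^'t^'r::finite) measure) (\<lambda>H. (col_energy k H)\<^sup>2)"
    by (simp add: col_energy_sq_coords chan_moment4)
  have "(\<integral>H. (col_energy k H)\<^sup>2 \<partial>(chan_measure :: (complex^'t^'r::finite) measure))
      = (\<Sum>i\<in>(UNIV::'r set). \<Sum>i'\<in>UNIV. 1 + of_bool (i = i'))"
    by (simp add: col_energy_sq_coords integral_sum integral_add chan_moment4 isserlis4_def)
      (intro sum.cong refl, simp add: of_bool_def)
  also have "\<dots> = real CARD('r) * (real CARD('r) + 1)"
    by (simp add: sum.distrib algebra_simps)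
  finally show "(\<integral>H. (col_energy k H)\<^sup>2 \<partial>(chan_measure :: (complex^'t^'r::finite) measure))
      = real CARD('r) * (real CARD('r) + 1)" .
qed

text \<open>Isserlis' formula for the eight terms of \<open>|h_k^\<dagger> h_j|^2\<close> with \<open>j \<noteq> k\<close>.\<close>
lemma isserlis_interference:
  fixes i i' :: "'r::finite" and j k :: "'t::finite"
  assumes "j \<noteq> k"
  shows "isserlis4 (basis_re i k) (basis_re i j) (basis_re i' k) (basis_re i' j)
    + isserlis4 (basis_re i k) (basis_re i j) (basis_im i' k) (basis_im i' j)
    + isserlis4 (basis_im i k) (basis_im i j) (basis_re i' k) (basis_re i' j)
    + isserlis4 (basis_im i k) (basis_im i j) (basis_im i' k) (basis_im i' j)
    + isserlis4 (basis_re i k) (basis_im i j) (basis_re i' k) (basis_im i' j)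
    - isserlis4 (basis_re i k) (basis_im i j) (basis_im i' k) (basis_re i' j)
    - isserlis4 (basis_im i k) (basis_re i j) (basis_re i' k) (basis_im i' j)
    + isserlis4 (basis_im i k) (basis_re i j) (basis_im i' k) (basis_re i' j) = of_bool (i = i')"
  using assms by (simp add: isserlis4_def of_bool_def)

lemma
  fixes k :: "'t::finite"
  shows integrable_interference: "integrable (chan_measure :: (complex^'t^'r::finite) measure) (interference k)"
    and expectation_interference:
      "(\<integral>H. interference k H \<partial>(chan_measure :: (complex^'t^'r::finite) measure))
         = (real CARD('t) - 1) * real CARD('r)"
proof -
  show "integrable (chan_measure :: (complex^'t^'r::finite) measure) (interference k)"
    unfolding interference_def[abs_def] herm_sq_coords by (simp add: chan_moment4)
  have "(\<integral>H. interference k H \<partial>(chan_measure :: (complex^'t^'r::finite) measure))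
      = (\<Sum>j\<in>UNIV-{k}. \<Sum>i\<in>(UNIV::'r set). \<Sum>i'\<in>UNIV. of_bool (i = i'))"
    unfolding interference_def[abs_def] herm_sq_coords
    by (simp add: integral_sum integral_add integral_diff chan_moment4 isserlis_interference)
  also have "\<dots> = (real CARD('t) - 1) * real CARD('r)"
    by (simp add: card_Diff_singleton of_bool_def)
  finally show "(\<integral>H. interference k H \<partial>(chan_measure :: (complex^'t^'r::finite) measure))
      = (real CARD('t) - 1) * real CARD('r)" .
qed

lemma col_energy_measurable[measurable]: "col_energy k \<in> borel_measurable borel"
  unfolding col_energy_coords[abs_def] by measurable
lemma interference_measurable[measurable]: "interference k \<in> borel_measurable borel"
  unfolding interference_def[abs_def] herm_sq_coords by measurable

lemma measurable_chan_measure: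
  "f \<in> borel_measurable borel \<Longrightarrow> f \<in> borel_measurable (chan_measure :: (complex^'t::finite^'r::finite) measure)"
  unfolding chan_measure_def by simp

text \<open>A single integrable function dominating everything that appears in the derivatives of
  the integrands: \<open>chan_bound H = (1 + ||H||^2)^3\<close>, integrable since it is dominated by
  a product of one-dimensional polynomials in the coordinates.\<close>
definition chan_bound :: "complex^'t::finite^'r::finite \<Rightarrow> real" where
  "chan_bound H = (1 + (norm H)\<^sup>2)^3"

lemma prod_ge_1_sum:
  "finite A \<Longrightarrow> (\<And>b. b \<in> A \<Longrightarrow> 0 \<le> y b) \<Longrightarrow> 1 + (\<Sum>b\<in>A. y b) \<le> (\<Prod>b\<in>A. 1 + (y b :: real))"
proof (induction A rule: finite_induct)
  case empty then show ?case by simp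
next
  case (insert x F)
  have h: "1 + sum y F \<le> prod (\<lambda>b. 1 + y b) F" using insert by auto
  have p: "0 \<le> sum y F" using insert by (auto intro: sum_nonneg)
  have y: "0 \<le> y x" using insert by auto
  have "1 + sum y (insert x F) = 1 + y x + sum y F" using insert by simp
  also have "\<dots> \<le> (1 + y x) * (1 + sum y F)" using y p by (simp add: algebra_simps)
  also have "\<dots> \<le> (1 + y x) * prod (\<lambda>b. 1 + y b) F" using h y by (intro mult_left_mono) auto
  finally show ?case using insert by simp
qed

lemma norm_sq_Basis: "(norm (H::'a::euclidean_space))\<^sup>2 = (\<Sum>b\<in>Basis. (H \<bullet> b)\<^sup>2)"
  by (subst power2_norm_eq_inner, subst euclidean_inner) (simp add: power2_eq_square)

lemma integrable_chan_bound:
  "integrable (chan_measure :: (complex^'t::finite^'r::finite) measure) chan_bound"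
proof -
  let ?M = "chan_measure :: (complex^'t^'r) measure"
  have i1: "integrable lborel (\<lambda>x. gdens x * (1 + x\<^sup>2)^3)"
  proof -
    have "(\<lambda>x. gdens x * (1 + x\<^sup>2)^3)
        = (\<lambda>x. gdens x * x^0 + 3 * (gdens x * x^2) + 3 * (gdens x * x^4) + gdens x * x^6)"
      by (auto simp: fun_eq_iff algebra_simps power2_eq_square eval_nat_numeral)
    then show ?thesis
      using gdens_moment_integrable[of 0] gdens_moment_integrable[of 2]
        gdens_moment_integrable[of 4] gdens_moment_integrable[of 6]
      by (simp only:) (intro Bochner_Integration.integrable_add integrable_mult_right; assumption)
  qed
  have ip: "integrable ?M (\<lambda>H. \<Prod>b\<in>Basis. (\<lambda>x. (1 + x\<^sup>2)^3) (H\<bullet>b))"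
    by (rule chan_integral_prod(1)) (use i1 in auto)
  show ?thesis
  proof (rule Bochner_Integration.integrable_bound[OF ip])
    show "chan_bound \<in> borel_measurable ?M"
      unfolding chan_measure_def chan_bound_def by measurable
    show "AE H in ?M. norm (chan_bound H) \<le> norm (\<Prod>b\<in>Basis. (\<lambda>x. (1 + x\<^sup>2)^3) (H\<bullet>b))"
    proof (rule AE_I2)
      fix H :: "complex^'t^'r"
      have "1 + (norm H)\<^sup>2 \<le> (\<Prod>b\<in>Basis. 1 + (H\<bullet>b)\<^sup>2)"
        unfolding norm_sq_Basis by (rule prod_ge_1_sum) auto
      then have "(1 + (norm H)\<^sup>2)^3 \<le> (\<Prod>b\<in>Basis. 1 + (H\<bullet>b)\<^sup>2)^3"
        by (intro power_mono) auto
      then show "norm (chan_bound H) \<le> norm (\<Prod>b\<in>Basis. (\<lambda>x. (1 + x\<^sup>2)^3) (H\<bullet>b))"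
        by (simp add: chan_bound_def prod_power_distrib abs_prod)
    qed
  qed
qed

lemma chan_bound_dominates:
  fixes H :: "complex^'t::finite^'r::finite"
  shows "col_energy k H \<le> chan_bound H" and "(col_energy k H)\<^sup>2 \<le> chan_bound H"
    and "others_energy k H * col_energy k H \<le> chan_bound H"
    and "interference k H \<le> chan_bound H"
proof -
  define y where "y = (norm H)\<^sup>2"
  have y: "0 \<le> y" unfolding y_def by simp
  have a: "0 \<le> col_energy k H" "col_energy k H \<le> y"
    using col_energy_nonneg col_energy_le unfolding y_def by auto
  have t: "0 \<le> others_energy k H" "others_energy k H \<le> y"
    using others_energy_nonneg others_energy_le unfolding y_def by auto
  have cube: "y \<le> (1 + y)^3" "y * y \<le> (1 + y)^3"
    using y by (auto simp: power3_eq_cube algebra_simps mult_nonneg_nonneg)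
  have B: "chan_bound H = (1 + y)^3" unfolding chan_bound_def y_def ..
  show "col_energy k H \<le> chan_bound H" using a cube B by linarith
  have a2: "(col_energy k H)\<^sup>2 \<le> y * y" using a by (simp add: power2_eq_square mult_mono)
  then show "(col_energy k H)\<^sup>2 \<le> chan_bound H" using cube B by linarith
  have ta: "others_energy k H * col_energy k H \<le> y * y" using a t by (intro mult_mono) auto
  then show "others_energy k H * col_energy k H \<le> chan_bound H" using cube B by linarith
  have "interference k H \<le> others_energy k H * col_energy k H"
    using interference_le[of k H] by (simp add: mult.commute)
  then show "interference k H \<le> chan_bound H" using ta cube B by linarith
qed

subsection \<open>An abstract low-SNR lemma for rates of the form \<open>N E[ln(1 + \<rho>/N X)]\<close>\<close>

lemma ln_rate_integrand_bound:
  fixes x a N \<rho> :: real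
  assumes x: "0 \<le> x" "x \<le> a" and N: "1 \<le> N" and \<rho>: "\<rho> \<in> {0..<1}"
  shows "\<bar>ln (1 + \<rho> / N * x)\<bar> \<le> a"
proof -
  have s: "0 \<le> \<rho> / N" "\<rho> / N \<le> 1" using \<rho> N by (auto simp: divide_le_eq)
  have y0: "0 \<le> \<rho> / N * x" using s x by (intro mult_nonneg_nonneg) auto
  have "\<rho> / N * x \<le> 1 * a" using s x by (intro mult_mono) auto
  moreover have "ln (1 + \<rho> / N * x) \<le> \<rho> / N * x" using y0 by (rule ln_add_one_self_le_self)
  moreover have "0 \<le> ln (1 + \<rho> / N * x)" using y0 by simp
  ultimately show ?thesis by simp
qed

lemma wideband_slope_value:
  fixes N Nr :: real
  assumes "1 \<le> N" "1 \<le> Nr"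
  shows "wideband_slope Nr (N * (- (2 * ((N - 1) * Nr) + Nr * (Nr + 1)) / N\<^sup>2))
    = 2 * N * Nr / (2 * N + Nr - 1)"
proof -
  have nz: "2 * N + Nr - 1 \<noteq> 0" "Nr \<noteq> 0" "N \<noteq> 0" using assms by auto
  have "N * (- (2 * ((N - 1) * Nr) + Nr * (Nr + 1)) / N\<^sup>2) = - (Nr * (2 * N + Nr - 1) / N)"
    using nz by (simp add: field_simps power2_eq_square)
  then have "wideband_slope Nr (N * (- (2 * ((N - 1) * Nr) + Nr * (Nr + 1)) / N\<^sup>2))
      = (2 * N * Nr) * Nr / ((2 * N + Nr - 1) * Nr)"
    unfolding wideband_slope_def using nz by (simp add: power2_eq_square algebra_simps)
  also have "\<dots> = 2 * N * Nr / (2 * N + Nr - 1)"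
    using nz by (rule_tac mult_divide_mult_cancel_right) auto
  finally show ?thesis .
qed

lemma integrable_rate_integrand:
  fixes k :: "'t::finite" and X :: "real \<Rightarrow> complex^'t^'r::finite \<Rightarrow> real"
  assumes \<rho>: "\<rho> \<in> {0..<1}" and meas: "X \<rho> \<in> borel_measurable borel"
  and X_bounds: "\<And>H. 0 \<le> X \<rho> H \<and> X \<rho> H \<le> col_energy k H"
  shows "integrable (chan_measure :: (complex^'t^'r) measure) (\<lambda>H. ln (1 + \<rho> / real CARD('t) * X \<rho> H))"
proof (rule Bochner_Integration.integrable_bound[OF integrable_col_energy[of k]])
  show "(\<lambda>H. ln (1 + \<rho> / real CARD('t) * X \<rho> H)) \<in> borel_measurable chan_measure"
    using meas by (intro measurable_chan_measure) measurable
  have N: "1 \<le> real CARD('t)" by (simp add: Suc_le_eq)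
  show "AE H in chan_measure. norm (ln (1 + \<rho> / real CARD('t) * X \<rho> H)) \<le> norm (col_energy k H)"
  proof (rule AE_I2)
    fix H
    have "\<bar>ln (1 + \<rho> / real CARD('t) * X \<rho> H)\<bar> \<le> col_energy k H"
      using X_bounds by (intro ln_rate_integrand_bound[OF _ _ N \<rho>]) auto
    then show "norm (ln (1 + \<rho> / real CARD('t) * X \<rho> H)) \<le> norm (col_energy k H)"
      using col_energy_nonneg[of k H] by simp
  qed
qed

lemma expectation_second_derivative:
  fixes k :: "'t::finite"
  defines "N \<equiv> real CARD('t)" and "Nr \<equiv> real CARD('r::finite)"
  shows "(\<integral>H. - (2 * interference k H + (col_energy k H)\<^sup>2) / N\<^sup>2
      \<partial>(chan_measure :: (complex^'t^'r) measure)) = - (2 * ((N - 1) * Nr) + Nr * (Nr + 1)) / N\<^sup>2"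
  using expectation_interference[where k=k and 'r='r] expectation_col_energy_sq[where k=k and 'r='r]
    integrable_interference[where k=k and 'r='r] integrable_col_energy_sq[where k=k and 'r='r]
  unfolding N_def Nr_def by (simp add: integral_diff integral_divide_zero)

text \<open>Both derivatives of the rate are taken under the integral sign.\<close>
lemma low_snr_from_integrand:
  fixes k :: "'t::finite" and X gd :: "real \<Rightarrow> complex^'t^'r::finite \<Rightarrow> real"
  defines "N \<equiv> real CARD('t)" and "Nr \<equiv> real CARD('r)"
  assumes meas: "\<And>\<rho>. \<rho> \<in> {0..<1} \<Longrightarrow> X \<rho> \<in> borel_measurable borel"
  and X_bounds: "\<And>\<rho> H. \<rho> \<in> {0..<1} \<Longrightarrow> 0 \<le> X \<rho> H \<and> X \<rho> H \<le> col_energy k H"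
  and der1: "\<And>H \<rho>. \<rho> \<in> {0..<1} \<Longrightarrow>
    ((\<lambda>r. ln (1 + r / N * X r H)) has_real_derivative gd \<rho> H) (at \<rho> within {0..})"
  and bd1: "\<And>H \<rho>. \<rho> \<in> {0..<1} \<Longrightarrow> \<bar>gd \<rho> H\<bar> \<le> 2 * chan_bound H"
  and gd0: "\<And>H. gd 0 H = col_energy k H / N"
  and der2: "\<And>H. ((\<lambda>r. gd r H) has_real_derivative
    - (2 * interference k H + (col_energy k H)\<^sup>2) / N\<^sup>2) (at 0 within {0..})"
  and lip2: "\<And>H \<rho>. \<rho> \<in> {0..<1} \<Longrightarrow> \<bar>gd \<rho> H - gd 0 H\<bar> \<le> 3 * chan_bound H * \<rho>"
  shows "low_snr (rate X) (ln 2 / Nr) (2 * N * Nr / (2 * N + Nr - 1))"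
proof -
  let ?M = "chan_measure :: (complex^'t^'r) measure"
  define g where "g \<rho> H = ln (1 + \<rho> / N * X \<rho> H)" for \<rho> H
  have N1: "1 \<le> N" "1 \<le> Nr" unfolding N_def Nr_def by (auto simp: Suc_le_eq)
  have rate_eq: "rate X = (\<lambda>\<rho>. N * (\<integral>H. g \<rho> H \<partial>?M))"
    unfolding rate_def g_def N_def by simp
  have int: "integrable ?M (g \<rho>)" if \<rho>: "\<rho> \<in> {0..<1}" for \<rho>
    unfolding g_def N_def using meas[OF \<rho>] X_bounds[OF \<rho>] by (intro integrable_rate_integrand[OF \<rho>])
  have iB2: "integrable ?M (\<lambda>H. 2 * chan_bound H)" "integrable ?M (\<lambda>H. 3 * chan_bound H)"
    using integrable_chan_bound by auto
  have D1: "((\<lambda>r. \<integral>H. g r H \<partial>?M) has_real_derivative (\<integral>H. gd \<rho> H \<partial>?M)) (at \<rho> within {0..})"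
     and I1: "integrable ?M (gd \<rho>)" if \<rho>: "\<rho> \<in> {0..<1}" for \<rho>
  proof -
    have lip: "\<bar>g r H - g \<rho> H\<bar> \<le> 2 * chan_bound H * \<bar>r - \<rho>\<bar>" if "r \<in> {0..<1}" for r H
      using der1 bd1 that \<rho> unfolding g_def
      by (intro lipschitz_from_derivative_bound[where S="{0..<1}"]) auto
    show "((\<lambda>r. \<integral>H. g r H \<partial>?M) has_real_derivative (\<integral>H. gd \<rho> H \<partial>?M)) (at \<rho> within {0..})"
      "integrable ?M (gd \<rho>)"
      using has_real_derivative_integral[OF \<rho> int iB2(1) lip der1[OF \<rho>, folded g_def]] by auto
  qed
  define d2 where "d2 H = - (2 * interference k H + (col_energy k H)\<^sup>2) / N\<^sup>2"
    for H :: "complex^'t^'r"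
  have D2: "((\<lambda>r. \<integral>H. gd r H \<partial>?M) has_real_derivative (\<integral>H. d2 H \<partial>?M)) (at 0 within {0..})"
    using has_real_derivative_integral(1)[where \<epsilon>=1 and rz=0 and \<phi>=gd and \<phi>'=d2 and M="?M",
        OF _ I1 iB2(2)] lip2 der2
    unfolding d2_def by auto
  have E1: "(\<integral>H. gd 0 H \<partial>?M) = Nr / N"
    unfolding gd0 using expectation_col_energy[where k=k and 'r='r] unfolding N_def Nr_def by simp
  have E2: "(\<integral>H. d2 H \<partial>?M) = - (2 * ((N - 1) * Nr) + Nr * (Nr + 1)) / N\<^sup>2"
    unfolding d2_def N_def Nr_def by (rule expectation_second_derivative)
  show ?thesis unfolding low_snr_def rate_eq
  proof (intro exI conjI ballI)
    fix \<rho> :: real assume "\<rho> \<in> {0..<1}"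
    from DERIV_cmult[OF D1[OF this], of N]
    show "((\<lambda>\<rho>. N * (\<integral>H. g \<rho> H \<partial>?M)) has_real_derivative (\<lambda>\<rho>. N * (\<integral>H. gd \<rho> H \<partial>?M)) \<rho>)
      (at \<rho> within {0..})" by simp
  next
    show "((\<lambda>\<rho>. N * (\<integral>H. gd \<rho> H \<partial>?M)) has_real_derivative N * (\<integral>H. d2 H \<partial>?M)) (at 0 within {0..})"
      using D2 by (rule DERIV_cmult)
    show "EbN0_min ((\<lambda>\<rho>. N * (\<integral>H. gd \<rho> H \<partial>?M)) 0) = ln 2 / Nr"
      using N1 by (simp add: E1 EbN0_min_def)
    show "wideband_slope ((\<lambda>\<rho>. N * (\<integral>H. gd \<rho> H \<partial>?M)) 0) (N * (\<integral>H. d2 H \<partial>?M))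
      = 2 * N * Nr / (2 * N + Nr - 1)"
      using N1 wideband_slope_value[OF N1] by (simp add: E1 E2)
  qed simp
qed

subsection \<open>The MRC receiver\<close>

lemma X_MRC_eq:
  fixes k :: "'t::finite" and H :: "complex^'t^'r::finite"
  shows "X_MRC k r H = col_energy k H / (1 + r / real CARD('t) * interference k H / col_energy k H)"
  unfolding X_MRC_def col_energy_def interference_def ..

lemma mrc_log_eq:
  fixes a c N r :: real
  assumes a: "0 < a" and c: "0 \<le> c" and N: "0 < N" and r: "0 \<le> r"
  shows "ln (1 + r / N * (a / (1 + r / N * c / a))) = ln (a + r * ((c + a\<^sup>2) / N)) - ln (a + r * (c / N))"
proof -
  have s0: "0 \<le> r / N" using r N by simp
  have q: "0 < a + r / N * c" using a c s0 mult_nonneg_nonneg[OF s0 c] by linarith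
  have p: "0 < a + r / N * (c + a\<^sup>2)"
    using a c s0 mult_nonneg_nonneg[OF s0, of "c + a\<^sup>2"] by (smt (verit) zero_le_power2)
  define s where "s = r / N"
  have frac: "1 + s * c / a = (a + s * c) / a" using a by (simp add: field_simps)
  have "1 + s * (a / (1 + s * c / a)) = 1 + s * (a\<^sup>2 / (a + s * c))"
    using a q unfolding frac s_def[symmetric] by (simp add: field_simps power2_eq_square)
  also have "\<dots> = (a + s * (c + a\<^sup>2)) / (a + s * c)"
    using q unfolding s_def[symmetric] by (simp add: field_simps)
  finally have "1 + r / N * (a / (1 + r / N * c / a)) = (a + r / N * (c + a\<^sup>2)) / (a + r / N * c)"
    unfolding s_def .
  then show ?thesis using p q by (simp add: ln_div)
qed

text \<open>The first derivative of the MRC integrand, as a function of \<open>a\<close>, \<open>c\<close> and \<open>\<rho>\<close>.\<close>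
definition mrc_deriv :: "real \<Rightarrow> real \<Rightarrow> real \<Rightarrow> real \<Rightarrow> real" where
  "mrc_deriv N a c r = a^3 / (N * ((a + r * ((c + a\<^sup>2) / N)) * (a + r * (c / N))))"

lemma mrc_deriv_0: "mrc_deriv N a c 0 = a / N"
  by (cases "a = 0") (simp_all add: mrc_deriv_def power2_eq_square power3_eq_cube)

lemma mrc_log_has_derivative:
  fixes a c N \<rho> :: real
  assumes a: "0 < a" and c: "0 \<le> c" and N: "0 < N" and \<rho>: "0 \<le> \<rho>"
  shows "((\<lambda>r. ln (1 + r / N * (a / (1 + r / N * c / a)))) has_real_derivative mrc_deriv N a c \<rho>)
    (at \<rho> within {0..})"
proof -
  define P Q where "P = a + \<rho> * ((c + a\<^sup>2) / N)" and "Q = a + \<rho> * (c / N)"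
  have PQ: "0 < P" "0 < Q" unfolding P_def Q_def using a c N \<rho> by (simp_all add: add_pos_nonneg)
  have log_affine: "((\<lambda>r. ln (a + r * \<alpha>)) has_real_derivative \<alpha> / (a + \<rho> * \<alpha>)) (at \<rho> within {0..})"
    if "0 < a + \<rho> * \<alpha>" for \<alpha>
  proof -
    have "((\<lambda>r. a + r * \<alpha>) has_real_derivative \<alpha>) (at \<rho> within {0..})"
      by (auto intro!: derivative_eq_intros)
    from DERIV_chain2[OF DERIV_ln_divide[OF that] this] show ?thesis by simp
  qed
  have "(c + a\<^sup>2) * Q - c * P = a ^ 3"
    unfolding P_def Q_def using N by (simp add: field_simps power2_eq_square power3_eq_cube)
  moreover have "((c + a\<^sup>2) / N) / P - (c / N) / Q = ((c + a\<^sup>2) * Q - c * P) / (N * (P * Q))"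
    using PQ N by (simp add: field_simps)
  ultimately have deriv_eq: "((c + a\<^sup>2) / N) / P - (c / N) / Q = mrc_deriv N a c \<rho>"
    unfolding mrc_deriv_def P_def Q_def by simp
  show ?thesis
  proof (rule has_field_derivative_transform_within[where d=1])
    show "((\<lambda>r. ln (a + r * ((c + a\<^sup>2) / N)) - ln (a + r * (c / N))) has_real_derivative mrc_deriv N a c \<rho>)
      (at \<rho> within {0..})"
      using DERIV_diff[OF log_affine[of "(c + a\<^sup>2) / N"] log_affine[of "c / N"]] PQ deriv_eq
      unfolding P_def Q_def by simp
    show "ln (a + x * ((c + a\<^sup>2) / N)) - ln (a + x * (c / N)) = ln (1 + x / N * (a / (1 + x / N * c / a)))"
      if "x \<in> {0..}" for x
      using mrc_log_eq[OF a c N, of x] that by simp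
  qed (use \<rho> in auto)
qed

lemma mrc_deriv_has_derivative:
  fixes a c N \<rho> :: real
  assumes a: "0 < a" and c: "0 \<le> c" and N: "1 \<le> N" and \<rho>: "0 \<le> \<rho>"
  defines "P' \<equiv> (c + a\<^sup>2) / N" and "Q' \<equiv> c / N"
  defines "P \<equiv> a + \<rho> * P'" and "Q \<equiv> a + \<rho> * Q'"
  shows "(mrc_deriv N a c has_real_derivative - (a ^ 3 / (P * Q)) * (P' / P + Q' / Q) / N)
    (at \<rho> within {0..})"
proof -
  have P'Q': "0 \<le> P'" "0 \<le> Q'" unfolding P'_def Q'_def using c N by auto
  have PQ: "a \<le> P" "a \<le> Q" unfolding P_def Q_def using \<rho> P'Q' by auto
  have nz: "N * (P * Q) \<noteq> 0" using PQ a N by auto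
  have "((\<lambda>r. a ^ 3 / (N * ((a + r * P') * (a + r * Q')))) has_real_derivative
      (0 * (N * (P * Q)) - a ^ 3 * (N * (P' * Q + Q' * P))) / (N * (P * Q) * (N * (P * Q))))
      (at \<rho> within {0..})"
    unfolding P_def Q_def using nz unfolding P_def Q_def
    by (intro DERIV_divide derivative_eq_intros) (auto simp: algebra_simps)
  moreover have "(0 * (N * (P * Q)) - a ^ 3 * (N * (P' * Q + Q' * P))) / (N * (P * Q) * (N * (P * Q)))
      = - (a ^ 3 / (P * Q)) * (P' / P + Q' / Q) / N"
    using a PQ N by (simp add: field_simps power3_eq_cube)
  moreover have "mrc_deriv N a c = (\<lambda>r. a ^ 3 / (N * ((a + r * P') * (a + r * Q'))))"
    unfolding mrc_deriv_def P'_def Q'_def by (rule ext) simp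
  ultimately show ?thesis by simp
qed

lemma mrc_deriv_derivative_bound:
  fixes a c N \<rho> :: real
  assumes a: "0 < a" and c: "0 \<le> c" and N: "1 \<le> N" and \<rho>: "0 \<le> \<rho>"
  defines "P' \<equiv> (c + a\<^sup>2) / N" and "Q' \<equiv> c / N"
  defines "P \<equiv> a + \<rho> * P'" and "Q \<equiv> a + \<rho> * Q'"
  shows "\<bar>- (a ^ 3 / (P * Q)) * (P' / P + Q' / Q) / N\<bar> \<le> 2 * c + a\<^sup>2"
proof -
  have P'Q': "0 \<le> P'" "0 \<le> Q'" unfolding P'_def Q'_def using c N by auto
  have PQ: "a \<le> P" "a \<le> Q" unfolding P_def Q_def using \<rho> P'Q' by auto
  have b1: "a ^ 3 / (P * Q) \<le> a"
  proof -
    have "a * a \<le> P * Q" using PQ a by (intro mult_mono) auto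
    then have "a ^ 3 \<le> a * (P * Q)" using a by (simp add: power3_eq_cube)
    then show ?thesis using a PQ by (simp add: divide_le_eq)
  qed
  have b2: "P' / P + Q' / Q \<le> P' / a + Q' / a"
    using a PQ P'Q' by (intro add_mono divide_left_mono) auto
  have nonneg: "0 \<le> (a ^ 3 / (P * Q)) * (P' / P + Q' / Q) / N"
    using a PQ N P'Q' by (intro divide_nonneg_pos mult_nonneg_nonneg add_nonneg_nonneg) auto
  have "(a ^ 3 / (P * Q)) * (P' / P + Q' / Q) / N \<le> a * (P' / a + Q' / a) / N"
    using b1 b2 a PQ P'Q' N by (intro divide_right_mono mult_mono) auto
  also have "\<dots> = (2 * c + a\<^sup>2) / N / N" using a N unfolding P'_def Q'_def by (simp add: field_simps)
  also have "\<dots> \<le> 2 * c + a\<^sup>2"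
    using c N divide_le_self[of "2 * c + a\<^sup>2" N] divide_le_self[of "(2 * c + a\<^sup>2) / N" N] by simp
  finally show ?thesis using nonneg by simp
qed

lemma mrc_deriv_has_derivative_0:
  fixes a c N :: real
  assumes "0 < a" "0 \<le> c" "1 \<le> N"
  shows "(mrc_deriv N a c has_real_derivative - (2 * c + a\<^sup>2) / N\<^sup>2) (at 0 within {0..})"
proof -
  have "- (a ^ 3 / (a * a)) * ((c + a\<^sup>2) / N / a + c / N / a) / N = - (2 * c + a\<^sup>2) / N\<^sup>2"
    using assms by (simp add: field_simps power2_eq_square power3_eq_cube)
  then show ?thesis using mrc_deriv_has_derivative[OF assms order_refl] by simp
qed

lemma mrc_deriv_bound:
  fixes a c N \<rho> :: real
  assumes a: "0 \<le> a" and c: "0 \<le> c" and N: "1 \<le> N" and \<rho>: "0 \<le> \<rho>"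
  shows "\<bar>mrc_deriv N a c \<rho>\<bar> \<le> a"
proof (cases "a = 0")
  case True then show ?thesis by (simp add: mrc_deriv_def)
next
  case False
  then have a: "0 < a" using a by simp
  define P Q where "P = a + \<rho> * ((c + a\<^sup>2) / N)" and "Q = a + \<rho> * (c / N)"
  have PQ: "a \<le> P" "a \<le> Q" unfolding P_def Q_def using \<rho> c N by auto
  have "a * a \<le> P * Q" using PQ a by (intro mult_mono) auto
  then have "a ^ 3 \<le> a * (P * Q)" using a by (simp add: power3_eq_cube)
  then have "a ^ 3 / (P * Q) \<le> a" using a PQ by (simp add: divide_le_eq)
  moreover have "a ^ 3 / (N * (P * Q)) \<le> a ^ 3 / (P * Q)"
    using a PQ N by (intro divide_left_mono) auto
  moreover have "0 \<le> a ^ 3 / (N * (P * Q))" using a PQ N by simp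
  ultimately show ?thesis unfolding mrc_deriv_def P_def[symmetric] Q_def[symmetric] by simp
qed

lemma mrc_deriv_lipschitz:
  fixes a c N \<rho> :: real
  assumes a: "0 \<le> a" and c: "0 \<le> c" and N: "1 \<le> N" and \<rho>: "0 \<le> \<rho>"
  shows "\<bar>mrc_deriv N a c \<rho> - mrc_deriv N a c 0\<bar> \<le> (2 * c + a\<^sup>2) * \<rho>"
proof (cases "a = 0")
  case True then show ?thesis using c \<rho> by (simp add: mrc_deriv_def)
next
  case False
  then have a: "0 < a" using a by simp
  have "\<bar>mrc_deriv N a c \<rho> - mrc_deriv N a c 0\<bar> \<le> (2 * c + a\<^sup>2) * \<bar>\<rho> - 0\<bar>"
  proof (rule lipschitz_from_derivative_bound[where S="{0..\<rho>}"])
    fix r assume r: "r \<in> {0..\<rho>}"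
    then show "(mrc_deriv N a c has_real_derivative
        - (a ^ 3 / ((a + r * ((c + a\<^sup>2) / N)) * (a + r * (c / N))))
          * ((c + a\<^sup>2) / N / (a + r * ((c + a\<^sup>2) / N)) + c / N / (a + r * (c / N))) / N)
        (at r within {0..})"
      using mrc_deriv_has_derivative[OF a c N] by simp
    show "\<bar>- (a ^ 3 / ((a + r * ((c + a\<^sup>2) / N)) * (a + r * (c / N))))
          * ((c + a\<^sup>2) / N / (a + r * ((c + a\<^sup>2) / N)) + c / N / (a + r * (c / N))) / N\<bar>
        \<le> 2 * c + a\<^sup>2"
      using mrc_deriv_derivative_bound[OF a c N] r by simp
  qed (use \<rho> in auto)
  then show ?thesis using \<rho> by simp
qed

lemma X_MRC_bounds:
  fixes k :: "'t::finite" and H :: "complex^'t^'r::finite"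
  assumes r: "0 \<le> r"
  shows "0 \<le> X_MRC k r H" "X_MRC k r H \<le> col_energy k H"
proof -
  define a c N where "a = col_energy k H" and "c = interference k H" and "N = real CARD('t)"
  have a: "0 \<le> a" unfolding a_def by (rule col_energy_nonneg)
  have c: "0 \<le> c" unfolding c_def by (rule interference_nonneg)
  have N: "0 < N" unfolding N_def by simp
  have d: "1 \<le> 1 + r / N * c / a" using a c N r by simp
  show "0 \<le> X_MRC k r H" unfolding X_MRC_eq a_def[symmetric] c_def[symmetric] N_def[symmetric]
    using a d by (intro divide_nonneg_nonneg) auto
  show "X_MRC k r H \<le> col_energy k H" unfolding X_MRC_eq a_def[symmetric] c_def[symmetric] N_def[symmetric]
    using a d divide_le_self by simp
qed

lemma X_MRC_measurable:
  fixes k :: "'t::finite"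
  shows "(X_MRC k r :: complex^'t^'r::finite \<Rightarrow> real) \<in> borel_measurable borel"
  unfolding X_MRC_eq[abs_def] by measurable

lemma mrc_integrand_deriv:
  fixes k :: "'t::finite" and H :: "complex^'t^'r::finite"
  assumes \<rho>: "0 \<le> \<rho>"
  shows "((\<lambda>r. ln (1 + r / real CARD('t) * X_MRC k r H)) has_real_derivative
    mrc_deriv (real CARD('t)) (col_energy k H) (interference k H) \<rho>) (at \<rho> within {0..})"
proof (cases "col_energy k H = 0")
  case True
  then show ?thesis by (simp add: X_MRC_eq mrc_deriv_def)
next
  case False
  then have "0 < col_energy k H" using col_energy_nonneg[of k H] by simp
  from mrc_log_has_derivative[OF this interference_nonneg[of k H] _ \<rho>, of "real CARD('t)"]
  show ?thesis unfolding X_MRC_eq by simp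
qed

theorem low_snr_MRC:
  fixes k :: "'t::finite"
  shows "low_snr (rate (X_MRC k :: real \<Rightarrow> complex^'t^'r::finite \<Rightarrow> real))
    (ln 2 / real CARD('r)) (2 * real CARD('t) * real CARD('r) / (2 * real CARD('t) + real CARD('r) - 1))"
proof (rule low_snr_from_integrand[where gd="\<lambda>\<rho> H. mrc_deriv (real CARD('t)) (col_energy k H) (interference k H) \<rho>"])
  have N: "1 \<le> real CARD('t)" by (simp add: Suc_le_eq)
  fix H :: "complex^'t^'r" and \<rho> :: real
  note stats = col_energy_nonneg[of k H] interference_nonneg[of k H] interference_zero[of k H]
    chan_bound_dominates[of k H]
  show "(X_MRC k \<rho> :: complex^'t^'r \<Rightarrow> real) \<in> borel_measurable borel" by (rule X_MRC_measurable)
  show "mrc_deriv (real CARD('t)) (col_energy k H) (interference k H) 0 = col_energy k H / real CARD('t)"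
    by (rule mrc_deriv_0)
  show "((\<lambda>r. mrc_deriv (real CARD('t)) (col_energy k H) (interference k H) r) has_real_derivative
      - (2 * interference k H + (col_energy k H)\<^sup>2) / (real CARD('t))\<^sup>2) (at 0 within {0..})"
  proof (cases "col_energy k H = 0")
    case True then show ?thesis using stats by (simp add: mrc_deriv_def)
  next
    case False then show ?thesis using stats N by (intro mrc_deriv_has_derivative_0) auto
  qed
  assume \<rho>: "\<rho> \<in> {0..<1}"
  show "0 \<le> X_MRC k \<rho> H \<and> X_MRC k \<rho> H \<le> col_energy k H" using X_MRC_bounds \<rho> by auto
  show "((\<lambda>r. ln (1 + r / real CARD('t) * X_MRC k r H)) has_real_derivative
      mrc_deriv (real CARD('t)) (col_energy k H) (interference k H) \<rho>) (at \<rho> within {0..})"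
    using \<rho> by (intro mrc_integrand_deriv) simp
  show "\<bar>mrc_deriv (real CARD('t)) (col_energy k H) (interference k H) \<rho>\<bar> \<le> 2 * chan_bound H"
  proof -
    have "\<bar>mrc_deriv (real CARD('t)) (col_energy k H) (interference k H) \<rho>\<bar> \<le> col_energy k H"
      using \<rho> N stats by (intro mrc_deriv_bound) auto
    then show ?thesis using stats chan_bound_dominates(1)[of k H] by linarith
  qed
  have "\<bar>mrc_deriv (real CARD('t)) (col_energy k H) (interference k H) \<rho>
      - mrc_deriv (real CARD('t)) (col_energy k H) (interference k H) 0\<bar>
      \<le> (2 * interference k H + (col_energy k H)\<^sup>2) * \<rho>"
    using \<rho> N stats by (intro mrc_deriv_lipschitz) auto
  also have "\<dots> \<le> 3 * chan_bound H * \<rho>" using \<rho> stats by (intro mult_right_mono) auto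
  finally show "\<bar>mrc_deriv (real CARD('t)) (col_energy k H) (interference k H) \<rho>
      - mrc_deriv (real CARD('t)) (col_energy k H) (interference k H) 0\<bar> \<le> 3 * chan_bound H * \<rho>" .
qed

subsection \<open>Operators for the MMSE receiver\<close>

text \<open>\<open>gram k H x = K K^\<dagger> x\<close> for \<open>K\<close> = \<open>H\<close> without column \<open>k\<close>, the regularized operator
  \<open>shifted s = I + s K K^\<dagger>\<close> and its inverse, which exists for \<open>s \<ge> 0\<close> because
  \<open>Re x^\<dagger> (I + s K K^\<dagger>) x \<ge> ||x||^2\<close>.\<close>
definition gram :: "'t \<Rightarrow> complex^'t::finite^'r::finite \<Rightarrow> complex^'r \<Rightarrow> complex^'r" where
  "gram k H x = (\<Sum>j\<in>UNIV - {k}. herm (column j H) x *s column j H)"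

lemma KKh_mult_gram: "KKh k H *v x = gram k H x"
  by (simp add: vec_eq_iff KKh_def gram_def matrix_vector_mult_def herm_def sum_component
      sum_distrib_left sum_distrib_right column_def algebra_simps sum.swap[of _ "UNIV - {k}"])

lemma scaleR_mat_vec:
  "((s::real) *\<^sub>R (A::complex^'n::finite^'m::finite)) *v x = complex_of_real s *s (A *v x)"
proof -
  have "(((s::real) *\<^sub>R A) *v x) $ i = (complex_of_real s *s (A *v x)) $ i" for i
  proof -
    have "(((s::real) *\<^sub>R A) *v x) $ i = (\<Sum>j\<in>UNIV. (s *\<^sub>R (A$i$j)) * x$j)"
      by (simp add: matrix_vector_mult_def)
    also have "\<dots> = (complex_of_real s *s (A *v x)) $ i"
      by (simp add: matrix_vector_mult_def sum_distrib_left scaleR_conv_of_real mult.assoc)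
    finally show ?thesis .
  qed
  then show ?thesis by (simp add: vec_eq_iff)
qed

lemma shifted_matrix_mult: "((s *\<^sub>R KKh k H + mat 1) *v x) = x + complex_of_real s *s gram k H x"
  by (simp add: matrix_vector_mult_add_rdistrib scaleR_mat_vec KKh_mult_gram add.commute)

lemma herm_gram:
  "herm x (gram k H x) = complex_of_real (\<Sum>j\<in>UNIV - {k}. (cmod (herm (column j H) x))\<^sup>2)"
proof -
  have "herm x (gram k H x) = (\<Sum>j\<in>UNIV - {k}. herm (column j H) x * herm x (column j H))"
    unfolding gram_def herm_sum_right herm_scale_right ..
  also have "\<dots> = (\<Sum>j\<in>UNIV - {k}. complex_of_real ((cmod (herm (column j H) x))\<^sup>2))"
    by (intro sum.cong refl) (metis herm_cnj cnj_mult_self mult.commute)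
  finally show ?thesis by simp
qed

lemma Re_herm_gram_nonneg: "0 \<le> Re (herm x (gram k H x))"
  by (simp add: herm_gram sum_nonneg)

lemma herm_gram_sym: "herm (gram k H x) y = herm x (gram k H y)"
proof -
  have "herm (gram k H x) y = (\<Sum>j\<in>UNIV - {k}. cnj (herm (column j H) x) * herm (column j H) y)"
    unfolding gram_def herm_sum_left herm_scale_left ..
  also have "\<dots> = (\<Sum>j\<in>UNIV - {k}. herm (column j H) y * herm x (column j H))"
    by (intro sum.cong refl) (metis herm_cnj mult.commute)
  also have "\<dots> = herm x (gram k H y)"
    unfolding gram_def herm_sum_right herm_scale_right ..
  finally show ?thesis .
qed

lemma norm_gram: "norm (gram k H x) \<le> others_energy k H * norm x"
proof -
  have "norm (gram k H x) \<le> (\<Sum>j\<in>UNIV - {k}. norm (herm (column j H) x *s column j H))"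
    unfolding gram_def by (rule norm_sum)
  also have "\<dots> \<le> (\<Sum>j\<in>UNIV - {k}. (norm (column j H))\<^sup>2 * norm x)"
  proof (intro sum_mono)
    fix j
    have "norm (herm (column j H) x *s column j H) = cmod (herm (column j H) x) * norm (column j H)"
      by (simp add: norm_scale_vec)
    also have "\<dots> \<le> (norm (column j H) * norm x) * norm (column j H)"
      by (intro mult_right_mono herm_CS) auto
    finally show "norm (herm (column j H) x *s column j H) \<le> (norm (column j H))\<^sup>2 * norm x"
      by (simp add: power2_eq_square algebra_simps)
  qed
  also have "\<dots> = others_energy k H * norm x" by (simp add: others_energy_def sum_distrib_right)
  finally show ?thesis .
qed

lemma gram_diff: "gram k H (x - y) = gram k H x - gram k H y"
  by (simp add: gram_def herm_diff_right vec_eq_iff sum_component algebra_simps sum_subtractf)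

definition shifted :: "real \<Rightarrow> 't \<Rightarrow> complex^'t::finite^'r::finite \<Rightarrow> complex^'r \<Rightarrow> complex^'r" where
  "shifted s k H x = x + complex_of_real s *s gram k H x"

lemma Re_herm_shifted: "0 \<le> s \<Longrightarrow> (norm x)\<^sup>2 \<le> Re (herm x (shifted s k H x))"
  unfolding shifted_def herm_add_right herm_scale_right
  using Re_herm_gram_nonneg[of x k H] by (simp add: Re_herm_self)

lemma shifted_inj: "0 \<le> s \<Longrightarrow> shifted s k H x = 0 \<Longrightarrow> x = 0"
  using Re_herm_shifted[of s x k H] by simp

definition shifted_inv :: "real \<Rightarrow> 't \<Rightarrow> complex^'t::finite^'r::finite \<Rightarrow> complex^'r \<Rightarrow> complex^'r" where
  "shifted_inv s k H x = matrix_inv (s *\<^sub>R KKh k H + mat 1) *v x"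

text \<open>An injective square matrix is invertible, so \<open>matrix_inv\<close> is a two-sided inverse.\<close>
lemma shifted_inverse:
  assumes s: "0 \<le> s"
  shows "shifted s k H (shifted_inv s k H x) = x" and "shifted_inv s k H (shifted s k H x) = x"
proof -
  let ?A = "s *\<^sub>R KKh k H + mat 1"
  have "\<forall>x. ?A *v x = 0 \<longrightarrow> x = 0"
    using shifted_inj[OF s, of k H] unfolding shifted_matrix_mult shifted_def by blast
  then obtain B where B: "B ** ?A = mat 1" using matrix_left_invertible_ker by blast
  then have "?A ** B = mat 1" using matrix_left_right_inverse by blast
  with B have "\<exists>A'. ?A ** A' = mat 1 \<and> A' ** ?A = mat 1" by blast
  then have I: "?A ** matrix_inv ?A = mat 1 \<and> matrix_inv ?A ** ?A = mat 1"
    unfolding matrix_inv_def by (rule someI_ex)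
  show "shifted s k H (shifted_inv s k H x) = x"
    using I unfolding shifted_inv_def shifted_matrix_mult[symmetric] shifted_def
    by (simp add: matrix_vector_mul_assoc)
  show "shifted_inv s k H (shifted s k H x) = x"
    using I unfolding shifted_inv_def shifted_matrix_mult[symmetric] shifted_def
    by (simp add: matrix_vector_mul_assoc)
qed

lemma shifted_inv_scale: "shifted_inv s k H (c *s x) = c *s shifted_inv s k H x"
  unfolding shifted_inv_def by (simp add: vector_scalar_commute)

lemma norm_shifted_inv: assumes s: "0 \<le> s" shows "norm (shifted_inv s k H x) \<le> norm x"
proof -
  let ?v = "shifted_inv s k H x"
  have "(norm ?v)\<^sup>2 \<le> Re (herm ?v (shifted s k H ?v))" by (rule Re_herm_shifted[OF s])
  also have "\<dots> = Re (herm ?v x)" by (simp only: shifted_inverse(1)[OF s])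
  also have "\<dots> \<le> norm ?v * norm x" using herm_CS[of ?v x] complex_Re_le_cmod[of "herm ?v x"] by linarith
  finally have "norm ?v * norm ?v \<le> norm ?v * norm x" by (simp add: power2_eq_square)
  then show ?thesis
    by (cases "norm ?v = 0") (auto simp: mult_le_cancel_left)
qed

lemma herm_shifted_sym: "herm (shifted s k H x) y = herm x (shifted s k H y)"
  unfolding shifted_def herm_add_right herm_add_left herm_scale_right herm_scale_left herm_gram_sym
  by simp

lemma herm_shifted_inv_sym:
  assumes s: "0 \<le> s"
  shows "herm (shifted_inv s k H x) y = herm x (shifted_inv s k H y)"
proof -
  let ?v = "shifted_inv s k H x" and ?w = "shifted_inv s k H y"
  have "herm ?v y = herm ?v (shifted s k H ?w)" using shifted_inverse(1)[OF s, of k H y] by simp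
  also have "\<dots> = herm (shifted s k H ?v) ?w" by (simp add: herm_shifted_sym)
  also have "\<dots> = herm x ?w" using shifted_inverse(1)[OF s, of k H x] by simp
  finally show ?thesis .
qed

lemma shifted_inv_zero: "shifted_inv 0 k H x = x"
  using shifted_inverse(2)[of 0 k H x] by (simp add: shifted_def)

lemma resolvent_identity:
  assumes s: "0 \<le> s" and t: "0 \<le> t"
  shows "shifted_inv s k H x - shifted_inv t k H x
    = complex_of_real (t - s) *s shifted_inv s k H (gram k H (shifted_inv t k H x))"
proof -
  let ?u = "shifted_inv t k H x"
  have "shifted s k H (shifted_inv s k H x - ?u) = x - shifted s k H ?u"
    using shifted_inverse(1)[OF s, of k H x] by (simp add: shifted_def gram_diff vec_eq_iff algebra_simps)
  also have "\<dots> = shifted t k H ?u - shifted s k H ?u" using shifted_inverse(1)[OF t, of k H x] by simp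
  also have "\<dots> = complex_of_real (t - s) *s gram k H ?u"
    by (simp add: shifted_def vec_eq_iff algebra_simps)
  finally have "shifted_inv s k H (shifted s k H (shifted_inv s k H x - ?u))
      = shifted_inv s k H (complex_of_real (t - s) *s gram k H ?u)" by simp
  then show ?thesis unfolding shifted_inverse(2)[OF s] shifted_inv_scale .
qed

lemma interference_herm_gram: "Re (herm (column k H) (gram k H (column k H))) = interference k H"
proof -
  have "Re (herm (column k H) (gram k H (column k H)))
      = (\<Sum>j\<in>UNIV - {k}. (cmod (herm (column j H) (column k H)))\<^sup>2)"
    by (simp add: herm_gram)
  also have "\<dots> = interference k H" unfolding interference_def
    by (intro sum.cong refl) (metis complex_mod_cnj herm_cnj)
  finally show ?thesis .
qed

lemma shifted_diff: "shifted s k H (x - y) = shifted s k H x - shifted s k H y"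
  by (simp add: shifted_def gram_diff vec_eq_iff algebra_simps)

text \<open>For fixed \<open>H\<close> and \<open>s = \<rho>/N \<ge> 0\<close> let \<open>u s = (I + sKK^\<dagger>)^-1 h_k\<close>, so that
  \<open>X_MMSE = Re h_k^\<dagger> u(\<rho>/N)\<close>.  By the resolvent identity the SINR is differentiable in
  \<open>s\<close> with derivative \<open>-u^\<dagger> K K^\<dagger> u\<close>, the form \<open>mmse_form s t = Re u(s)^\<dagger> KK^\<dagger> u(t)\<close>
  being Lipschitz in both arguments.\<close>
context
  fixes k :: "'t::finite" and H :: "complex^'t^'r::finite"
begin

abbreviation (input) "hk \<equiv> column k H"
definition "mmse_filter s = shifted_inv s k H hk"
definition "mmse_sinr s = Re (herm hk (mmse_filter s))"
definition "mmse_form s t = Re (herm (mmse_filter s) (gram k H (mmse_filter t)))"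

lemma norm_mmse_filter: "0 \<le> s \<Longrightarrow> norm (mmse_filter s) \<le> norm hk"
  unfolding mmse_filter_def by (rule norm_shifted_inv)

lemma norm_hk_sq: "(norm hk)\<^sup>2 = col_energy k H" by (simp add: col_energy_norm)

lemma mmse_sinr_diff:
  assumes s: "0 \<le> s" and t: "0 \<le> t"
  shows "mmse_sinr s - mmse_sinr t = (t - s) * mmse_form s t"
proof -
  have "mmse_sinr s - mmse_sinr t = Re (herm hk (mmse_filter s - mmse_filter t))" unfolding mmse_sinr_def by (simp add: herm_diff_right)
  also have "\<dots> = Re (herm hk (complex_of_real (t - s) *s shifted_inv s k H (gram k H (mmse_filter t))))"
    unfolding mmse_filter_def by (simp only: resolvent_identity[OF s t])
  also have "\<dots> = (t - s) * Re (herm (shifted_inv s k H hk) (gram k H (mmse_filter t)))"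
    by (subst herm_scale_right) (simp add: herm_shifted_inv_sym[OF s])
  finally show ?thesis unfolding mmse_form_def mmse_filter_def by simp
qed

lemma norm_gram_filter: "0 \<le> t \<Longrightarrow> norm (gram k H (mmse_filter t)) \<le> others_energy k H * norm hk"
  using norm_gram[of k H "mmse_filter t"] norm_mmse_filter[of t] others_energy_nonneg[of k H]
  by (meson mult_left_mono order_trans)

lemma mmse_form_bound:
  assumes s: "0 \<le> s" and t: "0 \<le> t"
  shows "\<bar>mmse_form s t\<bar> \<le> others_energy k H * col_energy k H"
proof -
  have "\<bar>mmse_form s t\<bar> \<le> cmod (herm (mmse_filter s) (gram k H (mmse_filter t)))" unfolding mmse_form_def by (rule abs_Re_le_cmod)
  also have "\<dots> \<le> norm (mmse_filter s) * norm (gram k H (mmse_filter t))" by (rule herm_CS)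
  also have "\<dots> \<le> norm hk * (others_energy k H * norm hk)"
    by (intro mult_mono norm_mmse_filter norm_gram_filter s t) auto
  finally show ?thesis by (simp add: norm_hk_sq[symmetric] power2_eq_square algebra_simps)
qed

lemma mmse_filter_lipschitz:
  assumes s: "0 \<le> s" and t: "0 \<le> t"
  shows "norm (mmse_filter s - mmse_filter t) \<le> \<bar>s - t\<bar> * (others_energy k H * norm hk)"
proof -
  have "norm (mmse_filter s - mmse_filter t) = \<bar>t - s\<bar> * norm (shifted_inv s k H (gram k H (mmse_filter t)))"
    unfolding mmse_filter_def resolvent_identity[OF s t] norm_scale_vec norm_of_real ..
  also have "\<dots> \<le> \<bar>t - s\<bar> * norm (gram k H (mmse_filter t))"
    by (intro mult_left_mono norm_shifted_inv s) auto
  also have "\<dots> \<le> \<bar>t - s\<bar> * (others_energy k H * norm hk)"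
    by (intro mult_left_mono norm_gram_filter t) auto
  finally show ?thesis by (simp add: abs_minus_commute)
qed

lemma mmse_form_lipschitz1:
  assumes s: "0 \<le> s" and t: "0 \<le> t"
  shows "\<bar>mmse_form s t - mmse_form t t\<bar> \<le> \<bar>s - t\<bar> * ((others_energy k H)\<^sup>2 * col_energy k H)"
proof -
  have "\<bar>mmse_form s t - mmse_form t t\<bar> = \<bar>Re (herm (mmse_filter s - mmse_filter t) (gram k H (mmse_filter t)))\<bar>"
    unfolding mmse_form_def by (simp add: herm_diff_left)
  also have "\<dots> \<le> norm (mmse_filter s - mmse_filter t) * norm (gram k H (mmse_filter t))"
    by (rule abs_Re_herm_le)
  also have "\<dots> \<le> (\<bar>s - t\<bar> * (others_energy k H * norm hk)) * (others_energy k H * norm hk)"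
    by (intro mult_mono mmse_filter_lipschitz norm_gram_filter s t) (auto simp: others_energy_nonneg)
  finally show ?thesis by (simp add: norm_hk_sq[symmetric] power2_eq_square algebra_simps)
qed

lemma mmse_form_lipschitz2:
  assumes s: "0 \<le> s" and t: "0 \<le> t"
  shows "\<bar>mmse_form s s - mmse_form t t\<bar> \<le> \<bar>s - t\<bar> * (2 * ((others_energy k H)\<^sup>2 * col_energy k H))"
proof -
  have e: "mmse_form s s - mmse_form t t = Re (herm (mmse_filter s - mmse_filter t) (gram k H (mmse_filter s))) + Re (herm (mmse_filter t) (gram k H (mmse_filter s - mmse_filter t)))"
    unfolding mmse_form_def by (simp add: herm_diff_left herm_diff_right gram_diff)
  have b1: "\<bar>Re (herm (mmse_filter s - mmse_filter t) (gram k H (mmse_filter s)))\<bar> \<le> \<bar>s - t\<bar> * ((others_energy k H)\<^sup>2 * col_energy k H)"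
  proof -
    have "\<bar>Re (herm (mmse_filter s - mmse_filter t) (gram k H (mmse_filter s)))\<bar> \<le> norm (mmse_filter s - mmse_filter t) * norm (gram k H (mmse_filter s))"
      by (rule abs_Re_herm_le)
    also have "\<dots> \<le> (\<bar>s - t\<bar> * (others_energy k H * norm hk)) * (others_energy k H * norm hk)"
      by (intro mult_mono mmse_filter_lipschitz norm_gram_filter s t) (auto simp: others_energy_nonneg)
    finally show ?thesis by (simp add: norm_hk_sq[symmetric] power2_eq_square algebra_simps)
  qed
  have b2: "\<bar>Re (herm (mmse_filter t) (gram k H (mmse_filter s - mmse_filter t)))\<bar> \<le> \<bar>s - t\<bar> * ((others_energy k H)\<^sup>2 * col_energy k H)"
  proof -
    have "\<bar>Re (herm (mmse_filter t) (gram k H (mmse_filter s - mmse_filter t)))\<bar> \<le> norm (mmse_filter t) * norm (gram k H (mmse_filter s - mmse_filter t))"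
      by (rule abs_Re_herm_le)
    also have "\<dots> \<le> norm hk * (others_energy k H * norm (mmse_filter s - mmse_filter t))"
      by (intro mult_mono norm_mmse_filter norm_gram t) auto
    also have "\<dots> \<le> norm hk * (others_energy k H * (\<bar>s - t\<bar> * (others_energy k H * norm hk)))"
      by (intro mult_left_mono mmse_filter_lipschitz s t others_energy_nonneg) (auto intro: others_energy_nonneg)
    finally show ?thesis by (simp add: norm_hk_sq[symmetric] power2_eq_square algebra_simps)
  qed
  show ?thesis unfolding e using b1 b2 by linarith
qed

lemma mmse_sinr_bounds:
  assumes s: "0 \<le> s"
  shows "0 \<le> mmse_sinr s" "mmse_sinr s \<le> col_energy k H"
proof -
  have h: "hk = shifted s k H (mmse_filter s)" unfolding mmse_filter_def by (rule shifted_inverse(1)[OF s, symmetric])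
  have "mmse_sinr s = Re (herm (mmse_filter s) (shifted s k H (mmse_filter s)))"
    unfolding mmse_sinr_def by (subst h) (simp add: herm_shifted_sym)
  then show "0 \<le> mmse_sinr s" using Re_herm_shifted[OF s, of "mmse_filter s" k H] by (metis order_trans zero_le_power2)
  have "mmse_sinr s \<le> cmod (herm hk (mmse_filter s))" unfolding mmse_sinr_def by (rule complex_Re_le_cmod)
  also have "\<dots> \<le> norm hk * norm (mmse_filter s)" by (rule herm_CS)
  also have "\<dots> \<le> norm hk * norm hk" by (intro mult_left_mono norm_mmse_filter s) auto
  finally show "mmse_sinr s \<le> col_energy k H" by (simp add: norm_hk_sq[symmetric] power2_eq_square)
qed

lemma mmse_form_nonneg: "0 \<le> mmse_form s s" unfolding mmse_form_def by (rule Re_herm_gram_nonneg)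

lemma mmse_sinr_0: "mmse_sinr 0 = col_energy k H" unfolding mmse_sinr_def mmse_filter_def shifted_inv_zero
  by (simp add: Re_herm_self norm_hk_sq)

lemma mmse_form_0: "mmse_form 0 0 = interference k H" unfolding mmse_form_def mmse_filter_def shifted_inv_zero by (rule interference_herm_gram)

lemma mmse_sinr_deriv:
  assumes s: "0 \<le> s"
  shows "(mmse_sinr has_real_derivative - mmse_form s s) (at s within {0..})"
  unfolding has_field_derivative_iff
proof -
  have "((\<lambda>y. mmse_form y s) \<longlongrightarrow> mmse_form s s) (at s within {0..})"
  proof (rule tendsto_within_atLeast_0_of_lipschitz)
    fix y :: real assume "0 \<le> y"
    then show "\<bar>mmse_form y s - mmse_form s s\<bar> \<le> (others_energy k H)\<^sup>2 * col_energy k H * \<bar>y - s\<bar>"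
      using mmse_form_lipschitz1[of y s] s by (simp add: mult.commute)
  qed
  then have "((\<lambda>y. - mmse_form y s) \<longlongrightarrow> - mmse_form s s) (at s within {0..})"
    by (rule tendsto_minus)
  then show "((\<lambda>y. (mmse_sinr y - mmse_sinr s) / (y - s)) \<longlongrightarrow> - mmse_form s s) (at s within {0..})"
  proof (rule Lim_transform_eventually)
    show "\<forall>\<^sub>F y in at s within {0..}. - mmse_form y s = (mmse_sinr y - mmse_sinr s) / (y - s)"
      unfolding eventually_at_filter
    proof (intro always_eventually allI impI)
      fix y assume y: "y \<noteq> s" "y \<in> {0..}"
      then have "y - s \<noteq> 0" by simp
      then show "- mmse_form y s = (mmse_sinr y - mmse_sinr s) / (y - s)"
        using y by (simp add: mmse_sinr_diff s field_simps)
    qed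
  qed
qed

lemma mmse_sinr_lipschitz_0:
  assumes s: "0 \<le> s"
  shows "\<bar>mmse_sinr s - col_energy k H\<bar> \<le> s * (others_energy k H * col_energy k H)"
proof -
  have "mmse_sinr s - col_energy k H = (0 - s) * mmse_form s 0"
    using mmse_sinr_diff[OF s order_refl] mmse_sinr_0 by simp
  then have "\<bar>mmse_sinr s - col_energy k H\<bar> = s * \<bar>mmse_form s 0\<bar>" using s by (simp add: abs_mult)
  also have "\<dots> \<le> s * (others_energy k H * col_energy k H)"
    using s by (intro mult_left_mono mmse_form_bound) auto
  finally show ?thesis .
qed

lemma mmse_form_lipschitz_0:
  assumes s: "0 \<le> s"
  shows "\<bar>mmse_form s s - interference k H\<bar> \<le> s * (2 * ((others_energy k H)\<^sup>2 * col_energy k H))"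
  using mmse_form_lipschitz2[OF s order_refl] s by (simp add: mmse_form_0)

end

text \<open>The MMSE integrand \<open>g(\<rho>) = ln(1 + \<rho>/N X(\<rho>/N))\<close> and its derivative
  \<open>g'(\<rho>) = (X(s) - s D(s)) / (N (1 + s X(s)))\<close>, \<open>s = \<rho>/N\<close>, \<open>D(s) = u(s)^\<dagger> K K^\<dagger> u(s)\<close>.\<close>
context
  fixes k :: "'t::finite" and H :: "complex^'t^'r::finite"
begin

lemma X_MMSE_sinr: "X_MMSE k \<rho> H = mmse_sinr k H (\<rho> / real CARD('t))"
  unfolding X_MMSE_def mmse_sinr_def mmse_filter_def shifted_inv_def ..

definition "mmse_rate_deriv \<rho> =
  (mmse_sinr k H (\<rho> / real CARD('t))
     - \<rho> / real CARD('t) * mmse_form k H (\<rho> / real CARD('t)) (\<rho> / real CARD('t)))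
  / (real CARD('t) * (1 + \<rho> / real CARD('t) * mmse_sinr k H (\<rho> / real CARD('t))))"

lemma mmse_sinr_scaled_deriv:
  assumes \<rho>: "0 \<le> \<rho>"
  shows "((\<lambda>\<rho>. mmse_sinr k H (\<rho> / real CARD('t))) has_real_derivative
    - mmse_form k H (\<rho> / real CARD('t)) (\<rho> / real CARD('t)) * (1 / real CARD('t))) (at \<rho> within {0..})"
proof -
  let ?N = "real CARD('t)"
  have N: "0 < ?N" by simp
  have g: "((\<lambda>\<rho>. \<rho> / ?N) has_real_derivative 1 / ?N) (at \<rho> within {0..})"
    by (auto intro!: derivative_eq_intros)
  have f: "(mmse_sinr k H has_real_derivative - mmse_form k H (\<rho> / ?N) (\<rho> / ?N))
      (at (\<rho> / ?N) within ((\<lambda>\<rho>. \<rho> / ?N) ` {0..}))"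
    unfolding image_divide_atLeast_0[OF N] using \<rho> N by (intro mmse_sinr_deriv) simp
  from DERIV_image_chain[OF f g] show ?thesis by (simp add: comp_def)
qed

lemma mmse_integrand_deriv:
  assumes \<rho>: "0 \<le> \<rho>"
  shows "((\<lambda>r. ln (1 + r / real CARD('t) * X_MMSE k r H)) has_real_derivative mmse_rate_deriv \<rho>)
    (at \<rho> within {0..})"
proof -
  let ?N = "real CARD('t)"
  define s where "s = \<rho> / ?N"
  have N: "0 < ?N" by simp
  have s0: "0 \<le> s" unfolding s_def using \<rho> by simp
  define D' where "D' = (1 / ?N) * mmse_sinr k H s + \<rho> / ?N * (- mmse_form k H s s * (1 / ?N))"
  have "((\<lambda>r. r / ?N) has_real_derivative 1 / ?N) (at \<rho> within {0..})" by (auto intro!: derivative_eq_intros)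
  from DERIV_mult[OF this mmse_sinr_scaled_deriv[OF \<rho>]]
  have inner: "((\<lambda>r. 1 + r / ?N * mmse_sinr k H (r / ?N)) has_real_derivative D') (at \<rho> within {0..})"
    unfolding D'_def s_def using DERIV_add[OF DERIV_const] by (simp add: mult_ac)
  have pos: "0 < 1 + \<rho> / ?N * mmse_sinr k H (\<rho> / ?N)"
    using mmse_sinr_bounds(1)[OF s0, of k H] \<rho> N unfolding s_def by (simp add: add_pos_nonneg)
  have "((\<lambda>r. ln (1 + r / ?N * mmse_sinr k H (r / ?N))) has_real_derivative
      1 / (1 + \<rho> / ?N * mmse_sinr k H s) * D') (at \<rho> within {0..})"
    using DERIV_chain2[OF DERIV_ln_divide[OF pos] inner] unfolding s_def .
  moreover have "1 / (1 + \<rho> / ?N * mmse_sinr k H s) * D' = mmse_rate_deriv \<rho>"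
    unfolding mmse_rate_deriv_def s_def[symmetric] D'_def using pos N unfolding s_def[symmetric]
    by (simp add: field_simps)
  ultimately show ?thesis unfolding X_MMSE_sinr by simp
qed

lemma mmse_rate_deriv_0: "mmse_rate_deriv 0 = col_energy k H / real CARD('t)"
  unfolding mmse_rate_deriv_def by (simp add: mmse_sinr_0)

lemma mmse_denominator_ge_1:
  assumes "0 \<le> \<rho>"
  shows "1 \<le> real CARD('t) * (1 + \<rho> / real CARD('t) * mmse_sinr k H (\<rho> / real CARD('t)))"
proof -
  have "0 \<le> \<rho> / real CARD('t) * mmse_sinr k H (\<rho> / real CARD('t))"
    using assms mmse_sinr_bounds(1)[of "\<rho> / real CARD('t)" k H] by simp
  moreover have "1 \<le> real CARD('t)" by (simp add: Suc_le_eq)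
  ultimately show ?thesis using mult_mono[of 1 "real CARD('t)" 1] by fastforce
qed

lemma mmse_rate_deriv_bound:
  assumes \<rho>: "\<rho> \<in> {0..<1}"
  shows "\<bar>mmse_rate_deriv \<rho>\<bar> \<le> col_energy k H + others_energy k H * col_energy k H"
proof -
  define s where "s = \<rho> / real CARD('t)"
  have N: "1 \<le> real CARD('t)" by (simp add: Suc_le_eq)
  have "s \<le> \<rho>" unfolding s_def using \<rho> N divide_le_self[of \<rho> "real CARD('t)"] by auto
  moreover have "0 \<le> s" unfolding s_def using \<rho> by simp
  ultimately have s: "0 \<le> s" "s \<le> 1" using \<rho> by auto
  have X: "0 \<le> mmse_sinr k H s" "mmse_sinr k H s \<le> col_energy k H"
    using mmse_sinr_bounds[OF s(1)] by auto
  have D: "0 \<le> mmse_form k H s s" "mmse_form k H s s \<le> others_energy k H * col_energy k H"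
    using mmse_form_nonneg[of k H s] mmse_form_bound[OF s(1) s(1), of k H] by auto
  have "s * mmse_form k H s s \<le> 1 * (others_energy k H * col_energy k H)"
    using s D by (intro mult_mono) auto
  then have num: "\<bar>mmse_sinr k H s - s * mmse_form k H s s\<bar> \<le> col_energy k H + others_energy k H * col_energy k H"
    using X D s mult_nonneg_nonneg[OF s(1) D(1)] by linarith
  have den: "1 \<le> real CARD('t) * (1 + s * mmse_sinr k H s)"
    unfolding s_def using mmse_denominator_ge_1 \<rho> by simp
  have "\<bar>mmse_rate_deriv \<rho>\<bar> = \<bar>mmse_sinr k H s - s * mmse_form k H s s\<bar> / (real CARD('t) * (1 + s * mmse_sinr k H s))"
    unfolding mmse_rate_deriv_def s_def[symmetric] using den by (simp add: abs_divide)
  also have "\<dots> \<le> \<bar>mmse_sinr k H s - s * mmse_form k H s s\<bar>" using den by (intro divide_le_self) auto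
  finally show ?thesis using num by linarith
qed

lemma mmse_rate_deriv_lipschitz:
  assumes \<rho>: "\<rho> \<in> {0..<1}"
  shows "\<bar>mmse_rate_deriv \<rho> - mmse_rate_deriv 0\<bar>
    \<le> (2 * (others_energy k H * col_energy k H) + (col_energy k H)\<^sup>2) * \<rho>"
proof -
  let ?N = "real CARD('t)"
  define s where "s = \<rho> / ?N"
  define a X D T where "a = col_energy k H" and "X = mmse_sinr k H s" and "D = mmse_form k H s s"
    and "T = others_energy k H"
  have N: "1 \<le> ?N" by (simp add: Suc_le_eq)
  have s: "0 \<le> s" "s \<le> \<rho>" unfolding s_def using \<rho> N divide_le_self[of \<rho> ?N] by auto
  have a0: "0 \<le> a" "0 \<le> T" unfolding a_def T_def by (simp_all add: col_energy_nonneg others_energy_nonneg)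
  have Xb: "0 \<le> X" "X \<le> a" using mmse_sinr_bounds[OF s(1), of k H] unfolding X_def a_def by auto
  have Db: "\<bar>s * D\<bar> \<le> s * (T * a)"
    using s mmse_form_bound[OF s(1) s(1), of k H] unfolding D_def T_def a_def by (simp add: abs_mult mult_left_mono)
  have Xa: "\<bar>X - a\<bar> \<le> s * (T * a)" unfolding X_def a_def T_def by (rule mmse_sinr_lipschitz_0[OF s(1)])
  have aX: "\<bar>s * a * X\<bar> \<le> s * a\<^sup>2"
    using s Xb a0 by (simp add: abs_mult power2_eq_square mult_left_mono mult.assoc)
  have den: "1 \<le> ?N * (1 + s * X)" unfolding s_def X_def using mmse_denominator_ge_1 \<rho> by simp
  have "mmse_rate_deriv \<rho> = (X - s * D) / (?N * (1 + s * X))"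
    unfolding mmse_rate_deriv_def s_def[symmetric] X_def[symmetric] D_def[symmetric] ..
  moreover have "mmse_rate_deriv 0 = a * (1 + s * X) / (?N * (1 + s * X))"
  proof -
    have "?N * (1 + s * X) \<noteq> 0" using den by auto
    then show ?thesis unfolding mmse_rate_deriv_0 a_def[symmetric] by simp
  qed
  ultimately have "mmse_rate_deriv \<rho> - mmse_rate_deriv 0 = (X - s * D - a * (1 + s * X)) / (?N * (1 + s * X))"
    by (simp add: diff_divide_distrib)
  also have "X - s * D - a * (1 + s * X) = (X - a) - s * D - s * a * X" by (simp add: algebra_simps)
  finally have "\<bar>mmse_rate_deriv \<rho> - mmse_rate_deriv 0\<bar> = \<bar>(X - a) - s * D - s * a * X\<bar> / (?N * (1 + s * X))"
    using den by (simp add: abs_divide)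
  also have "\<dots> \<le> \<bar>(X - a) - s * D - s * a * X\<bar>" using den by (intro divide_le_self) auto
  also have "\<dots> \<le> s * (2 * (T * a) + a\<^sup>2)" using Xa Db aX by (simp add: algebra_simps abs_triangle_ineq4)
  also have "\<dots> \<le> \<rho> * (2 * (T * a) + a\<^sup>2)" using s a0 by (intro mult_right_mono) auto
  finally show ?thesis unfolding T_def a_def by (simp add: mult.commute)
qed

lemma mmse_scaled_tendsto_0:
  shows "((\<lambda>\<rho>. mmse_sinr k H (\<rho> / real CARD('t))) \<longlongrightarrow> col_energy k H) (at 0 within {0..})"
    and "((\<lambda>\<rho>. mmse_form k H (\<rho> / real CARD('t)) (\<rho> / real CARD('t))) \<longlongrightarrow> interference k H)
      (at 0 within {0..})"
proof -
  let ?N = "real CARD('t)" and ?T = "others_energy k H" and ?a = "col_energy k H"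
  have "((\<lambda>\<rho>. mmse_sinr k H (\<rho> / ?N)) \<longlongrightarrow> mmse_sinr k H (0 / ?N)) (at 0 within {0..})"
  proof (rule tendsto_within_atLeast_0_of_lipschitz[where C="?T * ?a / ?N"])
    fix \<rho> :: real assume "0 \<le> \<rho>"
    then show "\<bar>mmse_sinr k H (\<rho> / ?N) - mmse_sinr k H (0 / ?N)\<bar> \<le> ?T * ?a / ?N * \<bar>\<rho> - 0\<bar>"
      using mmse_sinr_lipschitz_0[of "\<rho> / ?N" k H] by (simp add: mmse_sinr_0 mult_ac)
  qed
  then show "((\<lambda>\<rho>. mmse_sinr k H (\<rho> / ?N)) \<longlongrightarrow> ?a) (at 0 within {0..})" by (simp add: mmse_sinr_0)
  have "((\<lambda>\<rho>. mmse_form k H (\<rho> / ?N) (\<rho> / ?N)) \<longlongrightarrow> mmse_form k H (0 / ?N) (0 / ?N)) (at 0 within {0..})"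
  proof (rule tendsto_within_atLeast_0_of_lipschitz[where C="2 * (?T\<^sup>2 * ?a) / ?N"])
    fix \<rho> :: real assume "0 \<le> \<rho>"
    then show "\<bar>mmse_form k H (\<rho> / ?N) (\<rho> / ?N) - mmse_form k H (0 / ?N) (0 / ?N)\<bar>
        \<le> 2 * (?T\<^sup>2 * ?a) / ?N * \<bar>\<rho> - 0\<bar>"
      using mmse_form_lipschitz_0[of "\<rho> / ?N" k H] by (simp add: mmse_form_0 mult_ac)
  qed
  then show "((\<lambda>\<rho>. mmse_form k H (\<rho> / ?N) (\<rho> / ?N)) \<longlongrightarrow> interference k H) (at 0 within {0..})"
    by (simp add: mmse_form_0)
qed

lemma mmse_rate_deriv_deriv:
  "(mmse_rate_deriv has_real_derivative - (2 * interference k H + (col_energy k H)\<^sup>2) / (real CARD('t))\<^sup>2)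
    (at 0 within {0..})"
proof -
  let ?N = "real CARD('t)" and ?a = "col_energy k H" and ?c = "interference k H"
  let ?X = "\<lambda>\<rho>. mmse_sinr k H (\<rho> / ?N)" and ?D = "\<lambda>\<rho>. mmse_form k H (\<rho> / ?N) (\<rho> / ?N)"
  have N: "0 < ?N" and Nnz: "?N \<noteq> 0" by simp_all
  have X0: "?X 0 = ?a" and D0: "?D 0 = ?c" by (simp_all add: mmse_sinr_0 mmse_form_0)
  have limX: "(?X \<longlongrightarrow> ?X 0) (at 0 within {0..})" and limD: "(?D \<longlongrightarrow> ?D 0) (at 0 within {0..})"
    unfolding X0 D0 by (rule mmse_scaled_tendsto_0)+
  have num: "((\<lambda>\<rho>. ?X \<rho> - \<rho> / ?N * ?D \<rho>) has_real_derivative - ?c / ?N - ?c / ?N) (at 0 within {0..})"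
    using DERIV_diff[OF mmse_sinr_scaled_deriv[of 0] has_real_derivative_scaled_at_0[OF limD Nnz]] N D0
    by simp
  have den: "((\<lambda>\<rho>. ?N * (1 + \<rho> / ?N * ?X \<rho>)) has_real_derivative ?a) (at 0 within {0..})"
    using DERIV_cmult[OF DERIV_add[OF DERIV_const has_real_derivative_scaled_at_0[OF limX Nnz]], of ?N] N X0
    by simp
  have "(mmse_rate_deriv has_real_derivative
      ((- ?c / ?N - ?c / ?N) * (?N * (1 + 0 / ?N * ?X 0)) - (?X 0 - 0 / ?N * ?D 0) * ?a)
        / ((?N * (1 + 0 / ?N * ?X 0)) * (?N * (1 + 0 / ?N * ?X 0)))) (at 0 within {0..})"
    unfolding mmse_rate_deriv_def[abs_def] using N by (intro DERIV_divide[OF num den]) simp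
  moreover have "((- ?c / ?N - ?c / ?N) * (?N * (1 + 0 / ?N * ?X 0)) - (?X 0 - 0 / ?N * ?D 0) * ?a)
        / ((?N * (1 + 0 / ?N * ?X 0)) * (?N * (1 + 0 / ?N * ?X 0)))
      = - (2 * ?c + ?a\<^sup>2) / ?N\<^sup>2"
    using N X0 by (simp add: field_simps power2_eq_square)
  ultimately show ?thesis by simp
qed

end

subsection \<open>Measurability of the MMSE SINR\<close>

text \<open>Continuity of the MMSE SINR in the channel, which gives its measurability.  First, the
  rank-one maps \<open>x \<mapsto> (g^\<dagger> x) g\<close> depend Lipschitz-continuously on \<open>g\<close>.\<close>
lemma rank_one_diff:
  fixes g0 g x :: "complex^'n::finite"
  shows "norm (herm g0 x *s g0 - herm g x *s g) \<le> norm (g0 - g) * norm x * (norm g0 + norm g)"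
proof -
  have e: "herm g0 x *s g0 - herm g x *s g = herm (g0 - g) x *s g0 + herm g x *s (g0 - g)"
    by (simp add: herm_diff_left vec_eq_iff algebra_simps)
  have "norm (herm g0 x *s g0 - herm g x *s g)
      \<le> cmod (herm (g0 - g) x) * norm g0 + cmod (herm g x) * norm (g0 - g)"
    unfolding e using norm_triangle_ineq[of "herm (g0 - g) x *s g0" "herm g x *s (g0 - g)"]
    by (simp only: norm_scale_vec)
  also have "\<dots> \<le> (norm (g0 - g) * norm x) * norm g0 + (norm g * norm x) * norm (g0 - g)"
    by (intro add_mono mult_right_mono herm_CS) auto
  finally show ?thesis by (simp add: algebra_simps)
qed

lemma gram_diff_channel:
  fixes H0 H :: "complex^'t::finite^'r::finite"
  shows "norm (gram k H0 x - gram k H x)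
    \<le> real CARD('t) * (norm (H0 - H) * norm x * (2 * norm H0 + norm (H0 - H)))"
proof -
  let ?d = "norm (H0 - H)"
  have column_term: "norm (herm (column j H0) x *s column j H0 - herm (column j H) x *s column j H)
      \<le> ?d * norm x * (2 * norm H0 + ?d)" for j
  proof -
    have dg: "norm (column j H0 - column j H) \<le> ?d" using norm_column_le[of j "H0 - H"] by (simp add: column_diff)
    have g: "norm (column j H0) + norm (column j H) \<le> 2 * norm H0 + ?d"
      using norm_column_le[of j H0] norm_column_le[of j H] norm_triangle_ineq4[of H0 "H0 - H"]
      by (simp add: norm_minus_commute)
    have "norm (column j H0 - column j H) * norm x * (norm (column j H0) + norm (column j H))
        \<le> ?d * norm x * (2 * norm H0 + ?d)"
      using dg g by (intro mult_mono mult_right_mono) auto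
    with rank_one_diff[of "column j H0" x "column j H"] show ?thesis by linarith
  qed
  have "norm (gram k H0 x - gram k H x)
      \<le> (\<Sum>j\<in>UNIV - {k}. norm (herm (column j H0) x *s column j H0 - herm (column j H) x *s column j H))"
    unfolding gram_def sum_subtractf[symmetric] by (rule norm_sum)
  also have "\<dots> \<le> (\<Sum>j\<in>(UNIV::'t set). ?d * norm x * (2 * norm H0 + ?d))"
    by (rule order_trans[OF sum_mono[OF column_term] sum_mono2]) auto
  finally show ?thesis by simp
qed

text \<open>The MMSE filter depends continuously on the channel: from
  \<open>(I + sKK^\<dagger>)(u - u_0) = (h_k - h_k0) + s (K_0K_0^\<dagger> - KK^\<dagger>) u_0\<close> and the contraction property.\<close>
lemma mmse_filter_diff_channel:
  fixes H0 H :: "complex^'t::finite^'r::finite"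
  assumes s: "0 \<le> s"
  shows "norm (mmse_filter k H s - mmse_filter k H0 s)
    \<le> norm (H0 - H) + s * (real CARD('t) * (norm (H0 - H) * norm H0 * (2 * norm H0 + norm (H0 - H))))"
proof -
  let ?d = "norm (H0 - H)"
  let ?u = "mmse_filter k H s" and ?uz = "mmse_filter k H0 s" and ?h = "column k H" and ?hz = "column k H0"
  let ?w = "(?h - ?hz) + complex_of_real s *s (gram k H0 ?uz - gram k H ?uz)"
  have hz: "?hz = ?uz + complex_of_real s *s gram k H0 ?uz"
    unfolding mmse_filter_def using shifted_inverse(1)[OF s, of k H0 ?hz] by (simp add: shifted_def)
  have "shifted s k H (?u - ?uz) = ?h - (?uz + complex_of_real s *s gram k H ?uz)"
    unfolding shifted_diff mmse_filter_def shifted_inverse(1)[OF s] by (simp add: shifted_def)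
  also have "\<dots> = ?w" by (subst hz) (simp add: vec_eq_iff algebra_simps)
  finally have ud: "?u - ?uz = shifted_inv s k H ?w" by (metis shifted_inverse(2)[OF s])
  have hd: "norm (?h - ?hz) \<le> ?d"
    using norm_column_le[of k "H - H0"] by (simp add: column_diff norm_minus_commute)
  have uz: "norm ?uz \<le> norm H0" using norm_mmse_filter[OF s, of k H0] norm_column_le[of k H0] by linarith
  have "norm (gram k H0 ?uz - gram k H ?uz) \<le> real CARD('t) * (?d * norm ?uz * (2 * norm H0 + ?d))"
    by (rule gram_diff_channel)
  also have "\<dots> \<le> real CARD('t) * (?d * norm H0 * (2 * norm H0 + ?d))"
    by (intro mult_left_mono mult_right_mono uz) auto
  finally have Kd: "norm (gram k H0 ?uz - gram k H ?uz) \<le> real CARD('t) * (?d * norm H0 * (2 * norm H0 + ?d))" .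
  have "norm (?u - ?uz) \<le> norm ?w" unfolding ud by (rule norm_shifted_inv[OF s])
  also have "\<dots> \<le> norm (?h - ?hz) + s * norm (gram k H0 ?uz - gram k H ?uz)"
    using norm_triangle_ineq[of "?h - ?hz" "complex_of_real s *s (gram k H0 ?uz - gram k H ?uz)"] s
    by (simp only: norm_scale_vec norm_of_real abs_of_nonneg)
  also have "\<dots> \<le> ?d + s * (real CARD('t) * (?d * norm H0 * (2 * norm H0 + ?d)))"
    by (intro add_mono hd mult_left_mono Kd s)
  finally show ?thesis .
qed

lemma mmse_sinr_diff_channel:
  fixes H0 H :: "complex^'t::finite^'r::finite"
  assumes s: "0 \<le> s"
  shows "\<bar>mmse_sinr k H s - mmse_sinr k H0 s\<bar> \<le> norm (H0 - H) * (norm H0 + norm (H0 - H))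
     + norm H0 * (norm (H0 - H) + s * (real CARD('t) * (norm (H0 - H) * norm H0 * (2 * norm H0 + norm (H0 - H)))))"
proof -
  let ?d = "norm (H0 - H)"
  let ?u = "mmse_filter k H s" and ?uz = "mmse_filter k H0 s" and ?h = "column k H" and ?hz = "column k H0"
  have hd: "norm (?h - ?hz) \<le> ?d"
    using norm_column_le[of k "H - H0"] by (simp add: column_diff norm_minus_commute)
  have u: "norm ?u \<le> norm H0 + ?d"
    using norm_mmse_filter[OF s, of k H] norm_column_le[of k H] norm_triangle_ineq4[of H0 "H0 - H"]
    by (simp add: norm_minus_commute)
  have e: "mmse_sinr k H s - mmse_sinr k H0 s = Re (herm (?h - ?hz) ?u) + Re (herm ?hz (?u - ?uz))"
    unfolding mmse_sinr_def by (simp add: herm_diff_left herm_diff_right)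
  have "\<bar>Re (herm (?h - ?hz) ?u)\<bar> \<le> norm (?h - ?hz) * norm ?u"
    by (rule abs_Re_herm_le)
  also have "\<dots> \<le> ?d * (norm H0 + ?d)" by (intro mult_mono hd u) auto
  finally have b1: "\<bar>Re (herm (?h - ?hz) ?u)\<bar> \<le> ?d * (norm H0 + ?d)" .
  have "\<bar>Re (herm ?hz (?u - ?uz))\<bar> \<le> norm ?hz * norm (?u - ?uz)"
    by (rule abs_Re_herm_le)
  also have "\<dots> \<le> norm H0 * (?d + s * (real CARD('t) * (?d * norm H0 * (2 * norm H0 + ?d))))"
    by (intro mult_mono mmse_filter_diff_channel[OF s]) (auto simp: norm_column_le)
  finally have b2: "\<bar>Re (herm ?hz (?u - ?uz))\<bar>
      \<le> norm H0 * (?d + s * (real CARD('t) * (?d * norm H0 * (2 * norm H0 + ?d))))" .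
  show ?thesis unfolding e using b1 b2 by linarith
qed

lemma mmse_sinr_continuous:
  assumes s: "0 \<le> s"
  shows "continuous_on UNIV (\<lambda>H :: complex^'t::finite^'r::finite. mmse_sinr k H s)"
proof (intro continuous_at_imp_continuous_on ballI)
  fix H0 :: "complex^'t^'r"
  define E where
    "E d = d * (norm H0 + d) + norm H0 * (d + s * (real CARD('t) * (d * norm H0 * (2 * norm H0 + d))))"
    for d
  have "((\<lambda>H. mmse_sinr k H s - mmse_sinr k H0 s) \<longlongrightarrow> 0) (at H0)"
  proof (rule Lim_null_comparison)
    show "\<forall>\<^sub>F H in at H0. norm (mmse_sinr k H s - mmse_sinr k H0 s) \<le> E (norm (H0 - H))"
      unfolding E_def using mmse_sinr_diff_channel[OF s] by (intro always_eventually allI) simp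
    have "((\<lambda>H. E (norm (H0 - H))) \<longlongrightarrow> E (norm (H0 - H0))) (at H0)"
      unfolding E_def by (intro tendsto_intros)
    then show "((\<lambda>H. E (norm (H0 - H))) \<longlongrightarrow> 0) (at H0)" by (simp add: E_def)
  qed
  then have "((\<lambda>H. mmse_sinr k H s) \<longlongrightarrow> mmse_sinr k H0 s) (at H0)" by (rule LIM_zero_cancel)
  then show "isCont (\<lambda>H. mmse_sinr k H s) H0" unfolding isCont_def .
qed

lemma X_MMSE_measurable:
  fixes k :: "'t::finite"
  assumes "0 \<le> \<rho>"
  shows "(X_MMSE k \<rho> :: complex^'t^'r::finite \<Rightarrow> real) \<in> borel_measurable borel"
proof -
  have "(X_MMSE k \<rho> :: complex^'t^'r::finite \<Rightarrow> real) = (\<lambda>H. mmse_sinr k H (\<rho> / real CARD('t)))"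
    by (simp add: X_MMSE_sinr fun_eq_iff)
  moreover have "0 \<le> \<rho> / real CARD('t)" using assms by simp
  ultimately show ?thesis
    using borel_measurable_continuous_onI[OF mmse_sinr_continuous[of "\<rho> / real CARD('t)" k]] by simp
qed

theorem low_snr_MMSE:
  fixes k :: "'t::finite"
  shows "low_snr (rate (X_MMSE k :: real \<Rightarrow> complex^'t^'r::finite \<Rightarrow> real))
    (ln 2 / real CARD('r)) (2 * real CARD('t) * real CARD('r) / (2 * real CARD('t) + real CARD('r) - 1))"
proof (rule low_snr_from_integrand[where gd="\<lambda>\<rho> H. mmse_rate_deriv k H \<rho>"])
  fix H :: "complex^'t^'r" and \<rho> :: real
  note dom = chan_bound_dominates[of k H]
  show "mmse_rate_deriv k H 0 = col_energy k H / real CARD('t)" by (rule mmse_rate_deriv_0)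
  show "((\<lambda>r. mmse_rate_deriv k H r) has_real_derivative
      - (2 * interference k H + (col_energy k H)\<^sup>2) / (real CARD('t))\<^sup>2) (at 0 within {0..})"
    using mmse_rate_deriv_deriv[of k H] by simp
  assume \<rho>: "\<rho> \<in> {0..<1}"
  show "(X_MMSE k \<rho> :: complex^'t^'r \<Rightarrow> real) \<in> borel_measurable borel"
    using \<rho> by (intro X_MMSE_measurable) simp
  show "0 \<le> X_MMSE k \<rho> H \<and> X_MMSE k \<rho> H \<le> col_energy k H"
    using mmse_sinr_bounds[of "\<rho> / real CARD('t)" k H] \<rho> by (simp add: X_MMSE_sinr)
  show "((\<lambda>r. ln (1 + r / real CARD('t) * X_MMSE k r H)) has_real_derivative mmse_rate_deriv k H \<rho>)
      (at \<rho> within {0..})"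
    using \<rho> by (intro mmse_integrand_deriv) simp
  show "\<bar>mmse_rate_deriv k H \<rho>\<bar> \<le> 2 * chan_bound H"
    using mmse_rate_deriv_bound[OF \<rho>, of k H] dom by simp
  have "\<bar>mmse_rate_deriv k H \<rho> - mmse_rate_deriv k H 0\<bar>
      \<le> (2 * (others_energy k H * col_energy k H) + (col_energy k H)\<^sup>2) * \<rho>"
    by (rule mmse_rate_deriv_lipschitz[OF \<rho>])
  also have "\<dots> \<le> 3 * chan_bound H * \<rho>" using \<rho> dom by (intro mult_right_mono) auto
  finally show "\<bar>mmse_rate_deriv k H \<rho> - mmse_rate_deriv k H 0\<bar> \<le> 3 * chan_bound H * \<rho>" .
qed

theorem mainTheorem7:
  fixes k :: "'t::finite"
  defines "Ntr \<equiv> real CARD('t)" and "Nrr \<equiv> real CARD('r::finite)"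
  shows "low_snr (rate (X_MRC k :: real \<Rightarrow> complex^'t^'r \<Rightarrow> real))
            (ln 2 / Nrr) (2 * Ntr * Nrr / (2 * Ntr + Nrr - 1))
       \<and> low_snr (rate (X_MMSE k :: real \<Rightarrow> complex^'t^'r \<Rightarrow> real))
            (ln 2 / Nrr) (2 * Ntr * Nrr / (2 * Ntr + Nrr - 1))"
  unfolding Ntr_def Nrr_def using low_snr_MRC[of k] low_snr_MMSE[of k] by blast

end
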